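(* Let $L=1$ and let $\gamma,\theta,\zeta,\mu_1$ be generic complex parameters. Any solution $Z:\mathbb{C}\to\mathbb{C}$ of the functional equation \[ M_0(\lambda_0;\lambda_1)\,Z(\lambda_1)+M_1(\lambda_0;\lambda_1)\,Z(\lambda_0)=0\qquad\text{for generic }\lambda_0,\lambda_1, \] with $M_0,M_1$ as in the context (for $L=1$), can be written as \[ Z(\lambda)=\Omega_1\,[\gamma,\,\zeta+\mu_1]\,\frac{[\theta+\zeta-\mu_1,\,\theta+\gamma]}{[\theta+\zeta+\lambda,\,\theta]}\,[2\lambda]=\Omega_1\,[\gamma]\,\frac{[2\lambda]}{[2\lambda+\gamma]}\,m_1(\lambda) \] for some $\Omega_1$ not depending on $\lambda$, where \[ m_1(z)=[z+\zeta]\frac{[\theta+\zeta-z,\,\theta+\gamma+z-\mu_1]}{[\theta+\zeta+z,\,\theta]}[z+\mu_1+\gamma]-[z-\zeta+\gamma]\frac{[\theta+\zeta+z+\gamma,\,\theta-z-\mu_1]}{[\theta+\zeta+z,\,\theta]}[z-\mu_1]. \] Moreover, when $\Omega_1=\frac{[\theta-\gamma]}{[\theta+\gamma]}\cdot\frac{[\zeta-\mu_1,\,\theta+\zeta+\mu_1]}{[\zeta+\mu_1,\,\theta+\zeta-\mu_1]}$, $Z$ equals the partition function $\mathcal{Z}(\lambda)=\langle\bar0|\mathcal{B}(\lambda)|0\rangle$ for $L=1$.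
   Context: Fix $\tau\in\mathbb{C}$ with $\operatorname{Im}\tau>0$, let $f(\lambda)=\sum_{n\ge0}(-1)^n e^{\mathrm{i}n(n+1)\pi\tau}\sinh((2n+1)\lambda)$, and write $[x]:=f(x)$, $[x_1,\dots,x_k]:=f(x_1)\cdots f(x_k)$. For $L=1$ define $\Lambda_{\mathcal A}(\lambda)=[\zeta+\lambda]\frac{[\theta+\zeta-\lambda]}{[\theta+\zeta+\lambda]}[\lambda-\mu_1+\gamma,\lambda+\mu_1+\gamma]$, $\Lambda_{\tilde{\mathcal D}}(\lambda)=[\zeta-\lambda-\gamma]\frac{[2\lambda,\theta+\zeta+\lambda+\gamma,\theta-\gamma]}{[2\lambda+\gamma,\theta+\zeta+\lambda,\theta]}[\lambda-\mu_1,\lambda+\mu_1]$, $\bar\Lambda_{\mathcal A}(\lambda)=[\zeta-\lambda]\frac{[\gamma,\theta-2\lambda]}{[2\lambda+\gamma,\theta]}[\lambda-\mu_1+\gamma,\lambda+\mu_1+\gamma]+[\zeta+\lambda+\gamma]\frac{[2\lambda,\theta+\zeta-\lambda-\gamma,\theta+\gamma]}{[2\lambda+\gamma,\theta+\zeta+\lambda,\theta]}[\lambda-\mu_1,\lambda+\mu_1]$, $M_0(\lambda_0;\lambda_1)=\bar\Lambda_{\mathcal A}(\lambda_0)-\Lambda_{\mathcal A}(\lambda_0)\frac{[\lambda_1-\lambda_0+\gamma,\lambda_1+\lambda_0]}{[\lambda_1-\lambda_0,\lambda_1+\lambda_0+\gamma]}$, $M_1(\lambda_0;\lambda_1)=\frac{[2\lambda_1,\gamma,\theta+\lambda_1-\lambda_0]}{[2\lambda_1+\gamma,\lambda_1-\lambda_0,\theta]}\Lambda_{\mathcal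 A}(\lambda_1)+\frac{[\gamma,\theta-\gamma-\lambda_1-\lambda_0,\theta]}{[\lambda_1+\lambda_0+\gamma,\theta,\theta-\gamma]}\Lambda_{\tilde{\mathcal D}}(\lambda_1)$. Partition function for $L=1$: let $V=\mathbb{C}^2$ with basis $e_\pm$; $R(\lambda,\theta)\in\mathrm{End}(V\otimes V)$ has matrix $\begin{pmatrix}a_+&0&0&0\\0&b_+&c_+&0\\0&c_-&b_-&0\\0&0&0&a_-\end{pmatrix}$ in the ordered basis $(e_+\otimes e_+,e_+\otimes e_-,e_-\otimes e_+,e_-\otimes e_-)$ with $a_\pm=[\lambda+\gamma]$, $b_\pm=[\lambda][\theta\mp\gamma]/[\theta]$, $c_\pm=[\theta\mp\lambda][\gamma]/[\theta]$. On $V_0\otimes V_1$ (copies of $V$) let $T_0(\lambda)=R_{01}(\lambda-\mu_1,\theta)$, $\bar T_0(\lambda)=R_{10}(\lambda+\mu_1,\theta)$ ($R_{10}$ = $R$ acting on $V_1\otimes V_0$ with first leg $V_1$), $K_0(\lambda)=\mathrm{diag}([\zeta+\lambda][\theta+\zeta-\lambda]/[\theta+\zeta+\lambda],[\zeta-\lambda])$ on $V_0$, $\mathcal{T}_0(\lambda)=T_0K_0\bar T_0$, and $\mathcal{B}(\lambda)\in\mathrm{End}(V_1)$ defined by $\mathcal{T}_0(\lambda)(e_-\otimes w)=e_+\otimes\mathcal{B}(\lambda)w+e_-\otimes(\cdots)$. Then $\langle\bar0|\mathcal{B}(\lambda)|0\rangle$ denotes the $e_-$-coefficient of $\mathcal{B}(\lambda)e_+$.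 *)

theory Defs
  imports "HOL-Analysis.Analysis"
begin

definition br :: "complex \<Rightarrow> complex \<Rightarrow> complex" where
  "br tau x = (\<Sum>n. (-1)^n * exp (\<i> * of_nat (n * (n + 1)) * of_real pi * tau)
                      * sinh (of_nat (2 * n + 1) * x))"

definition LamA :: "complex \<Rightarrow> complex \<Rightarrow> complex \<Rightarrow> complex \<Rightarrow> complex \<Rightarrow> complex \<Rightarrow> complex" where
  "LamA tau g th ze mu l =
     br tau (ze + l) * br tau (th + ze - l) / br tau (th + ze + l)
     * (br tau (l - mu + g) * br tau (l + mu + g))"

definition LamDt :: "complex \<Rightarrow> complex \<Rightarrow> complex \<Rightarrow> complex \<Rightarrow> complex \<Rightarrow> complex \<Rightarrow> complex" where
  "LamDt tau g th ze mu l =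
     br tau (ze - l - g)
     * ((br tau (2 * l) * br tau (th + ze + l + g) * br tau (th - g))
        / (br tau (2 * l + g) * br tau (th + ze + l) * br tau th))
     * (br tau (l - mu) * br tau (l + mu))"

definition LamAbar :: "complex \<Rightarrow> complex \<Rightarrow> complex \<Rightarrow> complex \<Rightarrow> complex \<Rightarrow> complex \<Rightarrow> complex" where
  "LamAbar tau g th ze mu l =
     br tau (ze - l) * ((br tau g * br tau (th - 2 * l)) / (br tau (2 * l + g) * br tau th))
       * (br tau (l - mu + g) * br tau (l + mu + g))
   + br tau (ze + l + g)
       * ((br tau (2 * l) * br tau (th + ze - l - g) * br tau (th + g))
          / (br tau (2 * l + g) * br tau (th + ze + l) * br tau th))
       * (br tau (l - mu) * br tau (l + mu))"

definition M0 :: "complex \<Rightarrow> complex \<Rightarrow> complex \<Rightarrow> complex \<Rightarrow> complex \<Rightarrow> complex \<Rightarrow> complex \<Rightarrow> complex" where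
  "M0 tau g th ze mu l0 l1 =
     LamAbar tau g th ze mu l0
     - LamA tau g th ze mu l0 * ((br tau (l1 - l0 + g) * br tau (l1 + l0))
                                 / (br tau (l1 - l0) * br tau (l1 + l0 + g)))"

definition M1 :: "complex \<Rightarrow> complex \<Rightarrow> complex \<Rightarrow> complex \<Rightarrow> complex \<Rightarrow> complex \<Rightarrow> complex \<Rightarrow> complex" where
  "M1 tau g th ze mu l0 l1 =
     ((br tau (2 * l1) * br tau g * br tau (th + l1 - l0))
        / (br tau (2 * l1 + g) * br tau (l1 - l0) * br tau th)) * LamA tau g th ze mu l1
   + ((br tau g * br tau (th - g - l1 - l0) * br tau th)
        / (br tau (l1 + l0 + g) * br tau th * br tau (th - g))) * LamDt tau g th ze mu l1"

definition m1 :: "complex \<Rightarrow> complex \<Rightarrow> complex \<Rightarrow> complex \<Rightarrow> complex \<Rightarrow> complex \<Rightarrow> complex" where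
  "m1 tau g th ze mu z =
     br tau (z + ze) * ((br tau (th + ze - z) * br tau (th + g + z - mu))
                        / (br tau (th + ze + z) * br tau th)) * br tau (z + mu + g)
   - br tau (z - ze + g) * ((br tau (th + ze + z + g) * br tau (th - z - mu))
                        / (br tau (th + ze + z) * br tau th)) * br tau (z - mu)"

text \<open>Partition function for L = 1. Basis of V: True = e_+, False = e_-.
  Operators on V0 (x) V1 are functions on index pairs (s0, s1): entry (row, column).\<close>

definition Rmat :: "complex \<Rightarrow> complex \<Rightarrow> complex \<Rightarrow> complex
                     \<Rightarrow> bool \<times> bool \<Rightarrow> bool \<times> bool \<Rightarrow> complex" where
  "Rmat tau g th l = (\<lambda>(a, b) (c, d).
     if (a, b) = (c, d) then
       (if a = b then br tau (l + g)
        else if a then br tau l * br tau (th - g) / br tau th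
        else br tau l * br tau (th + g) / br tau th)
     else if a \<noteq> b \<and> c = b \<and> d = a then
       (if a then br tau (th - l) * br tau g / br tau th
        else br tau (th + l) * br tau g / br tau th)
     else 0)"

definition mmul :: "(bool \<times> bool \<Rightarrow> bool \<times> bool \<Rightarrow> complex)
                   \<Rightarrow> (bool \<times> bool \<Rightarrow> bool \<times> bool \<Rightarrow> complex)
                   \<Rightarrow> bool \<times> bool \<Rightarrow> bool \<times> bool \<Rightarrow> complex" where
  "mmul A B x y = (\<Sum>z\<in>UNIV. A x z * B z y)"

definition T0 :: "complex \<Rightarrow> complex \<Rightarrow> complex \<Rightarrow> complex \<Rightarrow> complex
                  \<Rightarrow> bool \<times> bool \<Rightarrow> bool \<times> bool \<Rightarrow> complex" where
  "T0 tau g th mu l = Rmat tau g th (l - mu)"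

text \<open>R_10: R acting on V1 (x) V0 with first leg V1.\<close>
definition Tbar0 :: "complex \<Rightarrow> complex \<Rightarrow> complex \<Rightarrow> complex \<Rightarrow> complex
                  \<Rightarrow> bool \<times> bool \<Rightarrow> bool \<times> bool \<Rightarrow> complex" where
  "Tbar0 tau g th mu l = (\<lambda>(s0, s1) (t0, t1). Rmat tau g th (l + mu) (s1, s0) (t1, t0))"

definition K0 :: "complex \<Rightarrow> complex \<Rightarrow> complex \<Rightarrow> complex
                  \<Rightarrow> bool \<times> bool \<Rightarrow> bool \<times> bool \<Rightarrow> complex" where
  "K0 tau th ze l = (\<lambda>(s0, s1) (t0, t1).
     if (s0, s1) = (t0, t1) then
       (if s0 then br tau (ze + l) * br tau (th + ze - l) / br tau (th + ze + l)
        else br tau (ze - l))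
     else 0)"

definition DoubleRow :: "complex \<Rightarrow> complex \<Rightarrow> complex \<Rightarrow> complex \<Rightarrow> complex \<Rightarrow> complex
                  \<Rightarrow> bool \<times> bool \<Rightarrow> bool \<times> bool \<Rightarrow> complex" where
  "DoubleRow tau g th ze mu l =
     mmul (mmul (T0 tau g th mu l) (K0 tau th ze l)) (Tbar0 tau g th mu l)"

text \<open>B(l) w = V0-component along e_+ of T(l)(e_- (x) w); the partition function is the
  e_- coefficient of B(l) e_+, i.e. the entry at row (e_+, e_-), column (e_-, e_+).\<close>
definition PartFun :: "complex \<Rightarrow> complex \<Rightarrow> complex \<Rightarrow> complex \<Rightarrow> complex \<Rightarrow> complex \<Rightarrow> complex" where
  "PartFun tau g th ze mu l = DoubleRow tau g th ze mu l (True, False) (False, True)"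

end

theory Submission
  imports Defs "HOL-Complex_Analysis.Complex_Analysis"
begin

text \<open>
  The bracket \<open>\<lbrakk>x\<rbrakk>\<close> is half the bilateral theta series
  \<open>\<Sum>n\<in>\<int>. (-1)^n q^(n(n+1)) exp((2n+1)x)\<close> with \<open>q = exp(i\<pi>\<tau>)\<close>. Multiplying two
  such series and splitting the index pairs by parity gives Weierstrass' addition formula
  \<open>\<lbrakk>x+y\<rbrakk>\<lbrakk>x-y\<rbrakk>\<lbrakk>u+v\<rbrakk>\<lbrakk>u-v\<rbrakk> = \<lbrakk>x+u\<rbrakk>\<lbrakk>x-u\<rbrakk>\<lbrakk>y+v\<rbrakk>\<lbrakk>y-v\<rbrakk> - \<lbrakk>x+v\<rbrakk>\<lbrakk>x-v\<rbrakk>\<lbrakk>y+u\<rbrakk>\<lbrakk>y-u\<rbrakk>\<close>,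
  and averaging over roots of unity shows that the bracket is not identically zero, so that
  its zeros are isolated.

  After clearing denominators, each of the three identities behind the theorem is a linear
  combination of instances of the addition formula: the closed form
  \<open>Z\<^sub>0(\<lambda>) = [\<gamma>][\<zeta>+\<mu>\<^sub>1][\<theta>+\<zeta>-\<mu>\<^sub>1][\<theta>+\<gamma>][2\<lambda>] / ([\<theta>+\<zeta>+\<lambda>][\<theta>])\<close> solves the functional
  equation, it equals \<open>[\<gamma>][2\<lambda>]/[2\<lambda>+\<gamma>] m\<^sub>1(\<lambda>)\<close>, and the partition function is \<open>\<Omega>\<^sub>1 Z\<^sub>0\<close>.

  Uniqueness: fix a generic \<open>\<lambda>\<^sub>0\<close>. The coefficient \<open>M\<^sub>0(\<lambda>\<^sub>0;\<lambda>)\<close> vanishes only on an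
  isolated set of \<open>\<lambda>\<close>, so the functional equation determines \<open>Z(\<lambda>)\<close> from \<open>Z(\<lambda>\<^sub>0)\<close>, and
  both \<open>Z\<close> and \<open>Z(\<lambda>\<^sub>0)/Z\<^sub>0(\<lambda>\<^sub>0) \<cdot> Z\<^sub>0\<close> are solutions. The parameters only have to avoid the
  closed set with empty interior on which one of \<open>[\<gamma>], [\<theta>], [\<gamma>-\<theta>], [\<zeta>+\<mu>\<^sub>1], [\<theta>+\<zeta>-\<mu>\<^sub>1],
  [\<theta>+\<gamma>]\<close> vanishes.
\<close>

section \<open>The theta series as a bilateral series\<close>

lemma UNIV_int_nonneg_neg_split:
  "range int \<union> range (\<lambda>k. - int (Suc k)) = UNIV"
  "range int \<inter> range (\<lambda>k. - int (Suc k)) = {}"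
proof -
  have "n \<in> range int \<union> range (\<lambda>k. - int (Suc k))" for n :: int
  proof (cases "n \<ge> 0")
    case True
    then show ?thesis by (metis UnI1 nonneg_int_cases rangeI)
  next
    case False
    then have "n = - int (Suc (nat (- n - 1)))" by auto
    then show ?thesis by blast
  qed
  then show "range int \<union> range (\<lambda>k. - int (Suc k)) = UNIV" by auto
qed auto

lemma geometric_int_has_sum:
  fixes r :: real
  assumes "0 \<le> r" "r < 1"
  shows "((\<lambda>k::int. r ^ nat \<bar>k\<bar>) has_sum ((1 + r) / (1 - r))) UNIV"
proof -
  have geom: "((\<lambda>k::nat. r ^ k) has_sum (1 / (1 - r))) UNIV"
    by (rule sums_nonneg_imp_has_sum) (use geometric_sums[of r] assms in auto)
  have nonneg: "((\<lambda>k::int. r ^ nat \<bar>k\<bar>) has_sum (1 / (1 - r))) (range int)"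
    by (subst has_sum_reindex) (auto simp: o_def geom)
  have "((\<lambda>k::int. r ^ nat \<bar>k\<bar>) \<circ> (\<lambda>k. - int (Suc k))) = (\<lambda>k. r * r ^ k)"
    by (auto simp: fun_eq_iff nat_add_distrib)
  then have neg: "((\<lambda>k::int. r ^ nat \<bar>k\<bar>) has_sum (r / (1 - r))) (range (\<lambda>k. - int (Suc k)))"
    using has_sum_cmult_right[OF geom, of r] by (subst has_sum_reindex) (auto simp: inj_on_def)
  have "((\<lambda>k::int. r ^ nat \<bar>k\<bar>) has_sum (1 / (1 - r) + r / (1 - r))) UNIV"
    by (subst UNIV_int_nonneg_neg_split(1)[symmetric])
       (rule has_sum_Un_disjoint[OF nonneg neg UNIV_int_nonneg_neg_split(2)])
  then show ?thesis
    using assms by (simp add: add_divide_distrib)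
qed

lemma gaussian_summable:
  fixes s K :: real
  assumes "s > 0"
  shows "(\<lambda>n::int. exp (- s * real_of_int n ^ 2 + K * real_of_int \<bar>n\<bar>)) summable_on UNIV"
proof -
  define C where "C = (K + 1)^2 / (4 * s)"
  have square_bound: "- s * t ^ 2 + K * t \<le> C - t" for t :: real
  proof -
    have "0 \<le> s * (t - (K + 1) / (2 * s))^2" using assms by simp
    also have "\<dots> = s * t^2 - (K + 1) * t + (K + 1)^2 / (4 * s)"
      using assms by (simp add: power2_eq_square field_simps)
    finally show ?thesis unfolding C_def by (simp add: algebra_simps)
  qed
  have "(\<lambda>k::int. exp (-1::real) ^ nat \<bar>k\<bar>) summable_on UNIV"
    by (rule has_sum_imp_summable, rule geometric_int_has_sum) auto
  then have "(\<lambda>n::int. exp C * exp (- real_of_int \<bar>n\<bar>)) summable_on UNIV"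
    by (intro summable_on_cmult_right) (simp add: exp_of_nat_mult[symmetric])
  then show ?thesis
  proof (rule summable_on_comparison_test)
    fix n :: int
    show "exp (- s * real_of_int n ^ 2 + K * real_of_int \<bar>n\<bar>) \<le> exp C * exp (- real_of_int \<bar>n\<bar>)"
      using square_bound[of "real_of_int \<bar>n\<bar>"] by (simp add: exp_add[symmetric])
  qed auto
qed

definition theta_coeff :: "complex \<Rightarrow> int \<Rightarrow> complex" where
  "theta_coeff tau n = (if even n then 1 else -1)
      * exp (\<i> * of_int (n * (n + 1)) * of_real pi * tau)"

definition theta_term :: "complex \<Rightarrow> complex \<Rightarrow> int \<Rightarrow> complex" where
  "theta_term tau x n = theta_coeff tau n * exp (of_int (2 * n + 1) * x)"

definition theta_series :: "complex \<Rightarrow> complex \<Rightarrow> complex" where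
  "theta_series tau x = (\<Sum>\<^sub>\<infinity>n. theta_term tau x n)"

lemma norm_theta_coeff:
  "norm (theta_coeff tau n) = exp (- pi * Im tau * real_of_int (n * (n + 1)))"
  unfolding theta_coeff_def by (simp add: norm_mult norm_exp_eq_Re del: of_int_mult)

definition theta_majorant :: "complex \<Rightarrow> real \<Rightarrow> int \<Rightarrow> real" where
  "theta_majorant tau R n = exp
      (- pi * Im tau * real_of_int (n * (n + 1)) + real_of_int \<bar>2 * n + 1\<bar> * R)"

lemma norm_theta_term_le:
  assumes "norm x \<le> R"
  shows "norm (theta_term tau x n) \<le> theta_majorant tau R n"
proof -
  have "real_of_int (2 * n + 1) * Re x \<le> real_of_int \<bar>2 * n + 1\<bar> * \<bar>Re x\<bar>"
    by (metis abs_ge_self abs_mult of_int_abs)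
  also have "\<dots> \<le> real_of_int \<bar>2 * n + 1\<bar> * R"
    using assms abs_Re_le_cmod[of x] by (intro mult_left_mono) auto
  finally show ?thesis
    unfolding theta_term_def theta_majorant_def norm_mult norm_theta_coeff exp_add
    by (intro mult_left_mono) (auto simp: norm_exp_eq_Re)
qed

lemma theta_majorant_summable:
  assumes "Im tau > 0"
  shows "theta_majorant tau R summable_on UNIV"
proof -
  define s where "s = pi * Im tau"
  have s: "s > 0" using assms by (simp add: s_def)
  have "(\<lambda>n::int. exp \<bar>R\<bar> * exp (- s * real_of_int n ^ 2 + (s + 2 * \<bar>R\<bar>) * real_of_int \<bar>n\<bar>))
          summable_on UNIV"
    by (rule summable_on_cmult_right[OF gaussian_summable[OF s]])
  then show ?thesis
  proof (rule summable_on_comparison_test)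
    fix n :: int
    have "- s * real_of_int (n * (n + 1)) \<le> - s * real_of_int n ^ 2 + s * real_of_int \<bar>n\<bar>"
      using mult_left_mono[OF abs_ge_minus_self[of "real_of_int n"], of s] s
      by (simp add: algebra_simps power2_eq_square)
    moreover have "real_of_int \<bar>2 * n + 1\<bar> * R \<le> (2 * real_of_int \<bar>n\<bar> + 1) * \<bar>R\<bar>"
      by (rule order_trans[OF mult_left_mono[OF abs_ge_self]]) (auto intro: mult_right_mono)
    ultimately show "theta_majorant tau R n
        \<le> exp \<bar>R\<bar> * exp (- s * real_of_int n ^ 2 + (s + 2 * \<bar>R\<bar>) * real_of_int \<bar>n\<bar>)"
      unfolding theta_majorant_def exp_add[symmetric] s_def by (simp add: algebra_simps)
  qed (simp add: theta_majorant_def)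
qed

lemma theta_term_abs_summable:
  assumes "Im tau > 0"
  shows "(\<lambda>n. norm (theta_term tau x n)) summable_on UNIV"
  by (rule summable_on_comparison_test[OF theta_majorant_summable[OF assms, of "norm x"]])
     (auto intro: norm_theta_term_le)

lemma theta_term_summable:
  assumes "Im tau > 0"
  shows "theta_term tau x summable_on UNIV"
  using theta_term_abs_summable[OF assms] abs_summable_summable by blast

lemma theta_series_holomorphic:
  assumes "Im tau > 0"
  shows "theta_series tau holomorphic_on UNIV"
proof -
  have "theta_series tau holomorphic_on ball z 1" for z
  proof -
    have lim: "uniform_limit (cball z 1) (\<lambda>F x. \<Sum>n\<in>F. theta_term tau x n) (theta_series tau)
            (finite_subsets_at_top UNIV)"
      unfolding theta_series_def
    proof (rule Weierstrass_m_test_general[OF _ theta_majorant_summable[OF assms]])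
      fix n x assume "x \<in> cball z (1::real)"
      then have "norm x \<le> norm z + 1"
        by (metis dist_norm mem_cball norm_minus_commute norm_triangle_sub order_trans
            add_le_cancel_left)
      then show "norm (theta_term tau x n) \<le> theta_majorant tau (norm z + 1) n"
        by (rule norm_theta_term_le)
    qed
    have "\<forall>\<^sub>F F in finite_subsets_at_top UNIV.
        continuous_on (cball z 1) (\<lambda>x. \<Sum>n\<in>F. theta_term tau x n)
        \<and> (\<lambda>x. \<Sum>n\<in>F. theta_term tau x n) holomorphic_on ball z 1"
      unfolding theta_term_def
      by (intro always_eventually allI conjI) (auto intro!: continuous_intros holomorphic_intros)
    from holomorphic_uniform_limit[OF this lim] show ?thesis by auto
  qed
  then show ?thesis
    by (meson UNIV_I centre_in_ball holomorphic_on_def holomorphic_on_imp_differentiable_at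
        open_ball zero_less_one field_differentiable_at_within)
qed

text \<open>Pairing the terms of index \<open>n\<close> and \<open>-n-1\<close> of the bilateral series produces
  the \<open>sinh\<close> series defining \<open>br\<close>.\<close>

lemma br_sums_half_theta_series:
  assumes "Im tau > 0"
  shows "(\<lambda>k. (-1)^k * exp (\<i> * of_nat (k * (k + 1)) * of_real pi * tau)
                * sinh (of_nat (2 * k + 1) * x)) sums (theta_series tau x / 2)"
proof -
  let ?N = "range int" and ?M = "range (\<lambda>k. - int (Suc k))"
  have sN: "theta_term tau x summable_on ?N" and sM: "theta_term tau x summable_on ?M"
    by (rule summable_on_subset_banach[OF theta_term_summable[OF assms]]; simp)+
  have split: "theta_series tau x = infsum (theta_term tau x) ?N + infsum (theta_term tau x) ?M"
    unfolding theta_series_def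
    by (subst UNIV_int_nonneg_neg_split(1)[symmetric])
       (rule infsum_Un_disjoint[OF sN sM UNIV_int_nonneg_neg_split(2)])
  have hN: "((\<lambda>k. theta_term tau x (int k)) has_sum infsum (theta_term tau x) ?N) UNIV"
    using has_sum_reindex[of int UNIV "theta_term tau x"] has_sum_infsum[OF sN] by (simp add: o_def)
  have hM: "((\<lambda>k. theta_term tau x (- int (Suc k))) has_sum infsum (theta_term tau x) ?M) UNIV"
    using has_sum_reindex[of "\<lambda>k. - int (Suc k)" UNIV "theta_term tau x"] has_sum_infsum[OF sM]
    by (simp add: o_def inj_on_def)
  have pair: "(theta_term tau x (int k) + theta_term tau x (- int (Suc k))) / 2
     = (-1)^k * exp (\<i> * of_nat (k * (k + 1)) * of_real pi * tau)
         * sinh (of_nat (2 * k + 1) * x)" for k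
  proof -
    have "(of_int (int k * (int k + 1)) :: complex) = of_nat (k * (k + 1))"
      "(of_int (- int (Suc k) * (- int (Suc k) + 1)) :: complex) = of_nat (k * (k + 1))"
      "(of_int (2 * - int (Suc k) + 1) :: complex) = - of_nat (2 * k + 1)"
      by (simp_all add: algebra_simps)
    then show ?thesis
      unfolding theta_term_def theta_coeff_def sinh_def
      by (simp add: scaleR_conv_of_real field_simps)
  qed
  have "((\<lambda>k. (theta_term tau x (int k) + theta_term tau x (- int (Suc k))) / 2)
          has_sum theta_series tau x / 2) UNIV"
    unfolding split by (intro has_sum_divide_const has_sum_add hN hM)
  then show ?thesis
    unfolding pair by (rule has_sum_imp_sums)
qed

lemma br_eq_half_theta_series:
  assumes "Im tau > 0"
  shows "br tau x = theta_series tau x / 2"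
  using br_sums_half_theta_series[OF assms, of x] unfolding br_def
  by (simp add: sums_unique[symmetric] mult.assoc)

lemma br_minus:
  assumes "Im tau > 0"
  shows "br tau (- x) = - br tau x"
proof -
  have "summable (\<lambda>n. (-1)^n * exp (\<i> * of_nat (n * (n + 1)) * of_real pi * tau)
                       * sinh (of_nat (2 * n + 1) * x))"
    using br_sums_half_theta_series[OF assms, of x] sums_summable by blast
  moreover have "(\<lambda>n. (-1)^n * exp (\<i> * of_nat (n * (n + 1)) * of_real pi * tau)
                        * sinh (of_nat (2 * n + 1) * (- x)))
      = (\<lambda>n. - ((-1)^n * exp (\<i> * of_nat (n * (n + 1)) * of_real pi * tau)
                  * sinh (of_nat (2 * n + 1) * x)))"
    by (simp add: fun_eq_iff)
  ultimately show ?thesis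
    unfolding br_def by (simp add: suminf_minus)
qed

section \<open>The Weierstrass addition formula\<close>

lemma has_sum_mult_abs_summable:
  fixes f g :: "'a \<Rightarrow> complex"
  assumes f: "(\<lambda>m. norm (f m)) summable_on UNIV" and g: "(\<lambda>n. norm (g n)) summable_on UNIV"
  shows "((\<lambda>(m, n). f m * g n) has_sum (infsum f UNIV * infsum g UNIV)) UNIV"
proof -
  have fs: "f summable_on UNIV" and gs: "g summable_on UNIV"
    using f g abs_summable_summable by blast+
  have inner: "((\<lambda>n. f m * g n) has_sum f m * infsum g UNIV) UNIV" for m
    by (rule has_sum_cmult_right[OF has_sum_infsum[OF gs]])
  have outer: "((\<lambda>m. f m * infsum g UNIV) has_sum infsum f UNIV * infsum g UNIV) UNIV"
    by (rule has_sum_cmult_left[OF has_sum_infsum[OF fs]])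
  have abs: "(\<lambda>p. norm ((\<lambda>(m, n). f m * g n) p)) summable_on Sigma UNIV (\<lambda>_. UNIV)"
  proof (subst Infinite_Sum.abs_summable_on_Sigma_iff, intro conjI ballI)
    show "(\<lambda>n. norm ((\<lambda>(m, n). f m * g n) (m, n))) summable_on UNIV" for m
      using summable_on_cmult_right[OF g, of "norm (f m)"] by (simp add: norm_mult)
    have "(\<lambda>m. norm (f m) * infsum (\<lambda>n. norm (g n)) UNIV) summable_on UNIV"
      by (rule summable_on_cmult_left[OF f])
    moreover have "infsum (\<lambda>n. norm ((\<lambda>(m, n). f m * g n) (m, n))) UNIV
                     = norm (f m) * infsum (\<lambda>n. norm (g n)) UNIV" for m
      by (simp add: norm_mult infsum_cmult_right')
    ultimately show "(\<lambda>m. norm (infsum (\<lambda>n. norm ((\<lambda>(m, n). f m * g n) (m, n))) UNIV))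
                       summable_on UNIV"
      by (simp add: infsum_nonneg)
  qed
  have "((\<lambda>(m, n). f m * g n) has_sum (infsum f UNIV * infsum g UNIV)) (Sigma UNIV (\<lambda>_. UNIV))"
    by (rule has_sum_SigmaI[where g="\<lambda>m. f m * infsum g UNIV"])
       (use inner outer abs_summable_summable[OF abs] in auto)
  then show ?thesis by simp
qed

text \<open>The terms of \<open>\<theta>\<^sub>2(2x | 2\<tau>)\<close> and \<open>\<theta>\<^sub>3(2x | 2\<tau>)\<close>, which appear in the product formula.\<close>

definition theta_odd_term :: "complex \<Rightarrow> complex \<Rightarrow> int \<Rightarrow> complex" where
  "theta_odd_term tau x k =
     exp (\<i> * of_int (2 * k * (k + 1)) * of_real pi * tau) * exp (of_int (2 * (2 * k + 1)) * x)"

definition theta_even_term :: "complex \<Rightarrow> complex \<Rightarrow> int \<Rightarrow> complex" where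
  "theta_even_term tau x k = exp (\<i> * of_int (2 * k * k) * of_real pi * tau)
      * exp (of_int (4 * k) * x)"

definition theta_odd_series :: "complex \<Rightarrow> complex \<Rightarrow> complex" where
  "theta_odd_series tau x = infsum (theta_odd_term tau x) UNIV"

definition theta_even_series :: "complex \<Rightarrow> complex \<Rightarrow> complex" where
  "theta_even_series tau x = infsum (theta_even_term tau x) UNIV"

lemma norm_theta_odd_term:
  "norm (theta_odd_term tau x k) = norm (theta_term (2 * tau) (2 * x) k)"
proof -
  have "exp (\<i> * of_int (2 * k * (k + 1)) * of_real pi * tau)
          = exp (\<i> * of_int (k * (k + 1)) * of_real pi * (2 * tau))"
    "exp (of_int (2 * (2 * k + 1)) * x) = exp (of_int (2 * k + 1) * (2 * x))"
    by (simp_all add: algebra_simps)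
  then show ?thesis
    unfolding theta_odd_term_def theta_term_def theta_coeff_def by (simp add: norm_mult)
qed

lemma theta_odd_term_abs_summable:
  assumes "Im tau > 0"
  shows "(\<lambda>k. norm (theta_odd_term tau x k)) summable_on UNIV"
  using theta_term_abs_summable[of "2 * tau" "2 * x"] assms by (simp add: norm_theta_odd_term)

lemma theta_even_term_abs_summable:
  assumes "Im tau > 0"
  shows "(\<lambda>k. norm (theta_even_term tau x k)) summable_on UNIV"
proof (rule summable_on_comparison_test[OF gaussian_summable[of "2 * pi * Im tau" "4 * norm x"]])
  fix k :: int
  have "real_of_int (4 * k) * Re x \<le> \<bar>real_of_int (4 * k) * Re x\<bar>" by simp
  also have "\<dots> = 4 * real_of_int \<bar>k\<bar> * \<bar>Re x\<bar>" by (simp add: abs_mult)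
  also have "\<dots> \<le> 4 * real_of_int \<bar>k\<bar> * norm x"
    using abs_Re_le_cmod[of x] by (intro mult_left_mono) auto
  finally show "norm (theta_even_term tau x k)
      \<le> exp (- (2 * pi * Im tau) * real_of_int k ^ 2 + 4 * norm x * real_of_int \<bar>k\<bar>)"
    unfolding theta_even_term_def norm_mult norm_exp_eq_Re exp_add[symmetric]
    by (simp add: power2_eq_square algebra_simps)
qed (use assms in auto)

lemma theta_term_mult_same_parity:
  "theta_term tau (x + y) (k + l) * theta_term tau (x - y) (k - l)
     = theta_odd_term tau x k * theta_even_term tau y l"
proof -
  have sign: "(if even (k + l) then 1 else -1) * (if even (k - l) then 1 else (-1::complex)) = 1"
    by auto
  have e1: "\<i> * of_int ((k + l) * ((k + l) + 1)) * of_real pi * tau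
              + \<i> * of_int ((k - l) * ((k - l) + 1)) * of_real pi * tau
      = \<i> * of_int (2 * k * (k + 1)) * of_real pi * tau + \<i> * of_int (2 * l * l) * of_real pi * tau"
    by (simp add: algebra_simps)
  have e2: "of_int (2 * (k + l) + 1) * (x + y) + of_int (2 * (k - l) + 1) * (x - y)
      = of_int (2 * (2 * k + 1)) * x + of_int (4 * l) * y"
    by (simp add: algebra_simps)
  have "theta_term tau (x + y) (k + l) * theta_term tau (x - y) (k - l) =
     ((if even (k + l) then 1 else -1) * (if even (k - l) then 1 else (-1::complex))) *
     (exp (\<i> * of_int ((k + l) * ((k + l) + 1)) * of_real pi * tau
           + \<i> * of_int ((k - l) * ((k - l) + 1)) * of_real pi * tau) *
      exp (of_int (2 * (k + l) + 1) * (x + y) + of_int (2 * (k - l) + 1) * (x - y)))"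
    unfolding theta_term_def theta_coeff_def exp_add by (simp only: mult_ac)
  also have "\<dots> = theta_odd_term tau x k * theta_even_term tau y l"
    unfolding sign e1 e2 theta_odd_term_def theta_even_term_def exp_add
    by (simp only: mult_ac mult_1)
  finally show ?thesis .
qed

lemma theta_term_mult_opposite_parity:
  "theta_term tau (x + y) (k + l) * theta_term tau (x - y) (k - l - 1)
     = - (theta_even_term tau x k * theta_odd_term tau y l)"
proof -
  have sign: "(if even (k + l) then 1 else -1)
      * (if even (k - l - 1) then 1 else (-1::complex)) = -1"
    by auto
  have e1: "\<i> * of_int ((k + l) * ((k + l) + 1)) * of_real pi * tau
              + \<i> * of_int ((k - l - 1) * ((k - l - 1) + 1)) * of_real pi * tau
      = \<i> * of_int (2 * k * k) * of_real pi * tau + \<i> * of_int (2 * l * (l + 1)) * of_real pi * tau"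
    by (simp add: algebra_simps)
  have e2: "of_int (2 * (k + l) + 1) * (x + y) + of_int (2 * (k - l - 1) + 1) * (x - y)
      = of_int (4 * k) * x + of_int (2 * (2 * l + 1)) * y"
    by (simp add: algebra_simps)
  have "theta_term tau (x + y) (k + l) * theta_term tau (x - y) (k - l - 1) =
     ((if even (k + l) then 1 else -1) * (if even (k - l - 1) then 1 else (-1::complex))) *
     (exp (\<i> * of_int ((k + l) * ((k + l) + 1)) * of_real pi * tau
           + \<i> * of_int ((k - l - 1) * ((k - l - 1) + 1)) * of_real pi * tau) *
      exp (of_int (2 * (k + l) + 1) * (x + y) + of_int (2 * (k - l - 1) + 1) * (x - y)))"
    unfolding theta_term_def theta_coeff_def exp_add by (simp only: mult_ac)
  also have "\<dots> = - (theta_even_term tau x k * theta_odd_term tau y l)"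
    unfolding sign e1 e2 theta_odd_term_def theta_even_term_def exp_add by (simp add: mult_ac)
  finally show ?thesis .
qed

text \<open>The index pairs \<open>(m, n)\<close> of the double series split according to the parity
  of \<open>m - n\<close> into \<open>(k + l, k - l)\<close> and \<open>(k + l, k - l - 1)\<close>.\<close>

lemma theta_series_mult:
  assumes "Im tau > 0"
  shows "theta_series tau (x + y) * theta_series tau (x - y)
           = theta_odd_series tau x * theta_even_series tau y
             - theta_even_series tau x * theta_odd_series tau y"
proof -
  define P where "P = (\<lambda>(m, n). theta_term tau (x + y) m * theta_term tau (x - y) n)"
  define same where "same = (\<lambda>(k::int, l::int). (k + l, k - l))"
  define opp where "opp = (\<lambda>(k::int, l::int). (k + l, k - l - 1))"
  have hP: "(P has_sum theta_series tau (x + y) * theta_series tau (x - y)) UNIV"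
    unfolding P_def theta_series_def
    by (rule has_sum_mult_abs_summable[OF theta_term_abs_summable[OF assms]
          theta_term_abs_summable[OF assms]])
  have inj: "inj same" "inj opp"
    unfolding same_def opp_def inj_def by auto
  have disj: "range same \<inter> range opp = {}"
    unfolding same_def opp_def by auto presburger
  have cover: "range same \<union> range opp = UNIV"
  proof -
    have "(m, n) \<in> range same \<union> range opp" for m n :: int
    proof (cases "even (m - n)")
      case True
      then obtain j where "m - n = 2 * j" by blast
      then have "same (n + j, j) = (m, n)" unfolding same_def by simp
      then show ?thesis by (metis UnI1 rangeI)
    next
      case False
      then obtain j where "m - n = 2 * j + 1" by (metis oddE)
      then have "opp (n + j + 1, j) = (m, n)" unfolding opp_def by simp
      then show ?thesis by (metis UnI2 rangeI)
    qed
    then show ?thesis by auto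
  qed
  have s: "P summable_on range same" "P summable_on range opp"
    by (rule summable_on_subset_banach[OF has_sum_imp_summable[OF hP]]; simp)+
  have "theta_series tau (x + y) * theta_series tau (x - y) = infsum P UNIV"
    using hP infsumI by metis
  also have "\<dots> = infsum (P \<circ> same) UNIV + infsum (P \<circ> opp) UNIV"
    by (subst cover[symmetric], subst infsum_Un_disjoint[OF s disj])
       (simp add: infsum_reindex[OF inj(1)] infsum_reindex[OF inj(2)])
  also have "P \<circ> same = (\<lambda>(k, l). theta_odd_term tau x k * theta_even_term tau y l)"
    unfolding P_def same_def by (auto simp: fun_eq_iff theta_term_mult_same_parity)
  also have "P \<circ> opp = (\<lambda>p. - (\<lambda>(k, l). theta_even_term tau x k * theta_odd_term tau y l) p)"
    unfolding P_def opp_def by (auto simp: fun_eq_iff theta_term_mult_opposite_parity)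
  finally show ?thesis
    unfolding infsum_uminus theta_odd_series_def theta_even_series_def
    using infsumI[OF has_sum_mult_abs_summable[OF theta_odd_term_abs_summable[OF assms]
            theta_even_term_abs_summable[OF assms]]]
          infsumI[OF has_sum_mult_abs_summable[OF theta_even_term_abs_summable[OF assms]
            theta_odd_term_abs_summable[OF assms]]]
    by simp
qed

lemma br_mult_plus_minus:
  assumes "Im tau > 0"
  shows "br tau (x + y) * br tau (x - y)
           = (theta_odd_series tau x * theta_even_series tau y
              - theta_even_series tau x * theta_odd_series tau y) / 4"
  using theta_series_mult[OF assms, of x y] by (simp add: br_eq_half_theta_series[OF assms])

lemma br_weierstrass:
  assumes "Im tau > 0"
  shows "br tau (x + y) * br tau (x - y) * br tau (u + v) * br tau (u - v)
       = br tau (x + u) * br tau (x - u) * br tau (y + v) * br tau (y - v)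
       - br tau (x + v) * br tau (x - v) * br tau (y + u) * br tau (y - u)"
proof -
  have "br tau (x + y) * br tau (x - y) * br tau (u + v) * br tau (u - v)
          = (br tau (x + y) * br tau (x - y)) * (br tau (u + v) * br tau (u - v))"
    "br tau (x + u) * br tau (x - u) * br tau (y + v) * br tau (y - v)
          = (br tau (x + u) * br tau (x - u)) * (br tau (y + v) * br tau (y - v))"
    "br tau (x + v) * br tau (x - v) * br tau (y + u) * br tau (y - u)
          = (br tau (x + v) * br tau (x - v)) * (br tau (y + u) * br tau (y - u))"
    by (simp_all only: mult.assoc)
  then show ?thesis
    unfolding br_mult_plus_minus[OF assms] by (simp add: field_simps) algebra
qed

section \<open>The theta series is not identically zero\<close>

lemma has_sum_sum:
  fixes f :: "'j \<Rightarrow> 'a \<Rightarrow> complex"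
  assumes "finite F" "\<And>j. j \<in> F \<Longrightarrow> (f j has_sum S j) A"
  shows "((\<lambda>n. \<Sum>j\<in>F. f j n) has_sum (\<Sum>j\<in>F. S j)) A"
  using assms by (induction F rule: finite_induct) (auto intro: has_sum_add)

lemma sum_roots_of_unity_power:
  assumes "N > 0"
  shows "(\<Sum>j<N. exp (2 * of_real pi * \<i> * of_int n * of_nat j / of_nat N))
           = (if int N dvd n then of_nat N else (0::complex))"
proof -
  define z where "z = exp (2 * of_real pi * \<i> * of_int n / of_nat N)"
  have powers: "exp (2 * of_real pi * \<i> * of_int n * of_nat j / of_nat N) = z ^ j" for j :: nat
    unfolding z_def exp_of_nat_mult[symmetric] by (simp add: field_simps)
  have "z ^ N = exp (2 * of_real pi * \<i> * of_int n)"
    unfolding z_def exp_of_nat_mult[symmetric] using assms by simp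
  also have "\<dots> = 1"
    unfolding exp_eq_1 by simp
  finally have zN: "z ^ N = 1" .
  have z1: "z = 1 \<longleftrightarrow> int N dvd n"
  proof
    assume "z = 1"
    then obtain m :: int where "2 * pi * real_of_int n / real N = real_of_int (2 * m) * pi"
      unfolding z_def exp_eq_1 by auto
    then have "real_of_int n = real_of_int m * real N"
      using assms by (simp add: field_simps)
    then have "n = m * int N"
      by (metis of_int_eq_iff of_int_mult of_int_of_nat_eq)
    then show "int N dvd n" by simp
  next
    assume "int N dvd n"
    then obtain m where "n = int N * m" by auto
    then have "z = exp (2 * of_real pi * \<i> * of_int m)"
      unfolding z_def using assms by (simp add: mult_ac)
    also have "\<dots> = 1"
      unfolding exp_eq_1 by simp
    finally show "z = 1" .
  qed
  show ?thesis
    unfolding powers using z1 zN by (auto simp: geometric_sum)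
qed

text \<open>Averaging \<open>e\<^sup>-\<^sup>x \<cdot> theta_series tau x\<close> over the \<open>N\<close> points
  \<open>x = \<pi>\<i>j/N\<close> kills every coefficient whose index is not a multiple of \<open>N\<close>.\<close>

lemma theta_coeff_multiples_has_sum_zero:
  assumes "Im tau > 0" and zero: "\<And>x. theta_series tau x = 0" and "N > 0"
  shows "((\<lambda>k. theta_coeff tau (int N * k)) has_sum 0) UNIV"
proof -
  define e where "e n j = exp (2 * of_real pi * \<i> * of_int n * of_nat j / of_nat N)"
    for n :: int and j :: nat
  have "((\<lambda>n. theta_coeff tau n * e n j) has_sum 0) UNIV" for j
  proof -
    define x :: complex where "x = \<i> * of_real pi * of_nat j / of_nat N"
    have "exp (- x) * theta_term tau x n = theta_coeff tau n * e n j" for n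
    proof -
      have "exp (- x) * exp (of_int (2 * n + 1) * x) = exp (- x + of_int (2 * n + 1) * x)"
        by (rule mult_exp_exp)
      also have "- x + of_int (2 * n + 1) * x = 2 * of_real pi * \<i> * of_int n * of_nat j / of_nat N"
        unfolding x_def using assms(3) by (simp add: field_simps)
      finally show ?thesis
        unfolding theta_term_def e_def by (simp add: mult_ac)
    qed
    moreover have "((\<lambda>n. exp (- x) * theta_term tau x n)
        has_sum exp (- x) * theta_series tau x) UNIV"
      unfolding theta_series_def
      by (rule has_sum_cmult_right[OF has_sum_infsum[OF theta_term_summable[OF assms(1)]]])
    ultimately show ?thesis
      using zero by simp
  qed
  then have "((\<lambda>n. \<Sum>j<N. theta_coeff tau n * e n j) has_sum (\<Sum>j<N. 0)) UNIV"
    by (intro has_sum_sum) auto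
  moreover have "(\<Sum>j<N. theta_coeff tau n * e n j)
                   = theta_coeff tau n * (if int N dvd n then of_nat N else 0)" for n
    unfolding sum_distrib_left[symmetric] e_def sum_roots_of_unity_power[OF assms(3)] ..
  ultimately have "((\<lambda>n. theta_coeff tau n * (if int N dvd n then of_nat N else 0)) has_sum 0)
                     (range (\<lambda>k. int N * k))"
    by (subst has_sum_cong_neutral[where T=UNIV]) (auto simp: dvd_def)
  then have "((\<lambda>k. theta_coeff tau (int N * k) * of_nat N) has_sum 0) UNIV"
    using assms(3) by (subst (asm) has_sum_reindex) (auto simp: inj_def o_def)
  from has_sum_divide_const[OF this, of "of_nat N"] show ?thesis
    using assms(3) by simp
qed

lemma norm_theta_coeff_multiple_le:
  assumes "Im tau > 0" "N \<ge> 2" "k \<noteq> 0"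
  shows "norm (theta_coeff tau (int N * k)) \<le> exp (- pi * Im tau * real N) ^ nat \<bar>k\<bar>"
proof -
  have "2 * 1 \<le> int N * \<bar>k\<bar>"
    using assms(2,3) by (intro mult_mono) auto
  then have "\<bar>int N * k\<bar> \<ge> 2"
    by (simp add: abs_mult)
  then have "int N * \<bar>k\<bar> \<le> (int N * k) * (int N * k + 1)"
    using mult_nonpos_nonpos[of "int N * k" "int N * k + 2"]
    by (cases "int N * k \<ge> 0") (auto simp: abs_mult algebra_simps)
  then have "real N * real_of_int \<bar>k\<bar> \<le> real_of_int ((int N * k) * (int N * k + 1))"
    by (metis of_int_le_iff of_int_mult of_int_of_nat_eq)
  then have "norm (theta_coeff tau (int N * k)) \<le> exp (- pi * Im tau * (real N * real_of_int \<bar>k\<bar>))"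
    unfolding norm_theta_coeff using assms(1) by (simp add: mult_left_mono)
  also have "\<dots> = exp (- pi * Im tau * real N) ^ nat \<bar>k\<bar>"
    by (simp add: exp_of_nat_mult[symmetric] algebra_simps)
  finally show ?thesis .
qed

text \<open>Otherwise the coefficients \<open>theta_coeff tau (N * k)\<close>, \<open>k \<noteq> 0\<close>, would sum to
  \<open>- theta_coeff tau 0 = -1\<close>, whereas for large \<open>N\<close> their absolute values sum to at most \<open>2/3\<close>.\<close>

lemma theta_series_not_identically_zero:
  assumes "Im tau > 0"
  shows "\<exists>x. theta_series tau x \<noteq> 0"
proof (rule ccontr)
  assume "\<not> ?thesis"
  then have zero: "\<And>x. theta_series tau x = 0" by auto
  define N :: nat where "N = nat \<lceil>ln 4 / (pi * Im tau)\<rceil> + 2"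
  define rho where "rho = exp (- pi * Im tau * real N)"
  have N: "N \<ge> 2" by (simp add: N_def)
  have "ln 4 \<le> pi * Im tau * real N"
    using assms pos_divide_le_eq[of "pi * Im tau" "ln 4" "real N"] unfolding N_def
    by (simp add: ac_simps) linarith
  then have "rho \<le> exp (- ln 4)"
    unfolding rho_def by simp
  then have rho: "0 \<le> rho" "rho \<le> 1/4"
    by (simp_all add: rho_def exp_minus)
  define A where "A = UNIV - {0::int}"
  have UNIV_eq: "UNIV = insert 0 A" "0 \<notin> A"
    by (auto simp: A_def)
  have geom: "((\<lambda>k::int. rho ^ nat \<bar>k\<bar>) has_sum ((1 + rho) / (1 - rho))) (insert 0 A)"
    using geometric_int_has_sum[of rho] rho unfolding UNIV_eq(1) by simp
  have geomA: "(\<lambda>k::int. rho ^ nat \<bar>k\<bar>) summable_on A"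
    by (rule summable_on_subset_banach[OF has_sum_imp_summable[OF geom]]) auto
  have geomA_sum: "infsum (\<lambda>k::int. rho ^ nat \<bar>k\<bar>) A = (1 + rho) / (1 - rho) - 1"
    using infsum_insert[OF geomA UNIV_eq(2)] infsumI[OF geom] by simp
  have bound: "norm (theta_coeff tau (int N * k)) \<le> rho ^ nat \<bar>k\<bar>" if "k \<in> A" for k
    using norm_theta_coeff_multiple_le[OF assms N] that unfolding rho_def A_def by simp
  have normA: "(\<lambda>k. norm (theta_coeff tau (int N * k))) summable_on A"
    by (rule summable_on_comparison_test[OF geomA]) (use bound in auto)
  have "infsum (\<lambda>k. theta_coeff tau (int N * k)) (insert 0 A) = 0"
    using theta_coeff_multiples_has_sum_zero[OF assms zero] N UNIV_eq(1) by (simp add: infsumI)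
  then have "infsum (\<lambda>k. theta_coeff tau (int N * k)) A = -1"
    using infsum_insert[OF abs_summable_summable[OF normA] UNIV_eq(2)]
    by (simp add: theta_coeff_def eq_neg_iff_add_eq_0 add.commute)
  moreover have "norm (infsum (\<lambda>k. theta_coeff tau (int N * k)) A) \<le> 2/3"
  proof -
    have "norm (infsum (\<lambda>k. theta_coeff tau (int N * k)) A)
            \<le> infsum (\<lambda>k. norm (theta_coeff tau (int N * k))) A"
      by (rule norm_infsum_bound) (use normA in simp)
    also have "\<dots> \<le> (1 + rho) / (1 - rho) - 1"
      using infsum_mono[OF normA geomA] bound geomA_sum by auto
    also have "\<dots> \<le> 2/3"
      using rho by (simp add: field_simps)
    finally show ?thesis .
  qed
  ultimately show False by simp
qed

lemma br_not_identically_zero: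
  assumes "Im tau > 0"
  shows "\<exists>x. br tau x \<noteq> 0"
  using theta_series_not_identically_zero[OF assms]
  by (auto simp: br_eq_half_theta_series[OF assms])

lemma not_islimpt_zeros_holomorphic:
  assumes "f holomorphic_on UNIV" "f z0 \<noteq> 0"
  shows "\<not> z islimpt {x. f x = 0}"
proof
  assume "z islimpt {x. f x = 0}"
  then have "f z0 = 0"
    by (rule analytic_continuation[OF assms(1) open_UNIV connected_UNIV subset_UNIV UNIV_I,
          where w=z0]) simp_all
  with assms(2) show False by simp
qed

lemma not_islimpt_translate:
  fixes E :: "'a::real_normed_vector set"
  assumes "\<forall>z. \<not> z islimpt E"
  shows "\<not> z islimpt {l. l + c \<in> E}"
proof
  assume "z islimpt {l. l + c \<in> E}"
  then have "z + c islimpt E"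
    unfolding islimpt_approachable
    by (metis (no_types, lifting) add_diff_cancel_right' dist_add_cancel2 mem_Collect_eq)
  with assms show False by auto
qed

locale odd_theta =
  fixes tau :: complex
  assumes Im_tau_pos: "0 < Im tau"
begin

abbreviation bracket :: "complex \<Rightarrow> complex" ("\<lbrakk>_\<rbrakk>") where
  "\<lbrakk>x\<rbrakk> \<equiv> br tau x"

lemma bracket_minus: "\<lbrakk>- x\<rbrakk> = - \<lbrakk>x\<rbrakk>"
  by (rule br_minus[OF Im_tau_pos])

lemma bracket_zero: "\<lbrakk>0\<rbrakk> = 0"
  using bracket_minus[of 0] by simp

lemma bracket_eq_minus_bracket: "x = - y \<Longrightarrow> \<lbrakk>x\<rbrakk> = - \<lbrakk>y\<rbrakk>"
  by (simp add: bracket_minus)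

text \<open>As a congruence rule this stops the simplifier from rewriting inside \<open>\<lbrakk>_\<rbrakk>\<close>,
  so that \<open>field_simps\<close> treats every bracket as an atom.\<close>

lemma bracket_atom_cong: "\<lbrakk>x\<rbrakk> = \<lbrakk>x\<rbrakk>"
  by (rule refl)

lemma bracket_holomorphic: "br tau holomorphic_on UNIV"
proof -
  have "(\<lambda>x. theta_series tau x / 2) holomorphic_on UNIV"
    by (intro holomorphic_intros theta_series_holomorphic[OF Im_tau_pos]) auto
  then show ?thesis
    by (simp add: br_eq_half_theta_series[OF Im_tau_pos, abs_def])
qed

lemma holomorphic_on_bracket_compose [holomorphic_intros]:
  "f holomorphic_on S \<Longrightarrow> (\<lambda>x. \<lbrakk>f x\<rbrakk>) holomorphic_on S"
  using holomorphic_on_compose[of f S "br tau"] holomorphic_on_subset[OF bracket_holomorphic]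
  by (simp add: o_def)

lemma continuous_on_bracket_compose [continuous_intros]:
  "continuous_on S f \<Longrightarrow> continuous_on S (\<lambda>x. \<lbrakk>f x\<rbrakk>)"
  using continuous_on_compose[of S f "br tau"]
    continuous_on_subset[OF holomorphic_on_imp_continuous_on[OF bracket_holomorphic]]
  by (simp add: o_def)

lemma not_islimpt_bracket_affine_zeros:
  assumes h: "\<And>x. h x = c * x + d" and "c \<noteq> 0"
  shows "\<not> z islimpt {x. \<lbrakk>h x\<rbrakk> = 0}"
proof -
  obtain x0 where "\<lbrakk>x0\<rbrakk> \<noteq> 0"
    using br_not_identically_zero[OF Im_tau_pos] by blast
  then have "\<lbrakk>h ((x0 - d) / c)\<rbrakk> \<noteq> 0"
    using assms by simp
  moreover have "(\<lambda>x. \<lbrakk>h x\<rbrakk>) holomorphic_on UNIV"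
    unfolding h by (intro holomorphic_intros)
  ultimately show ?thesis
    by (intro not_islimpt_zeros_holomorphic[of "\<lambda>x. \<lbrakk>h x\<rbrakk>"])
qed

text \<open>The Weierstrass addition formula, with the twelve arguments written in whatever normal
  form the caller needs.\<close>

lemma weierstrass_relation:
  assumes "x + y = a1" "x - y = a2" "u + v = a3" "u - v = a4"
    "x + u = b1" "x - u = b2" "y + v = b3" "y - v = b4"
    "x + v = c1" "x - v = c2" "y + u = c3" "y - u = c4"
  shows "\<lbrakk>a1\<rbrakk> * \<lbrakk>a2\<rbrakk> * \<lbrakk>a3\<rbrakk> * \<lbrakk>a4\<rbrakk>
           - (\<lbrakk>b1\<rbrakk> * \<lbrakk>b2\<rbrakk> * \<lbrakk>b3\<rbrakk> * \<lbrakk>b4\<rbrakk> - \<lbrakk>c1\<rbrakk> * \<lbrakk>c2\<rbrakk> * \<lbrakk>c3\<rbrakk> * \<lbrakk>c4\<rbrakk>) = 0"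
  using br_weierstrass[OF Im_tau_pos, of x y u v] unfolding assms by (simp only: right_minus_eq)

section \<open>The closed form solves the functional equation\<close>

definition Z_closed_form :: "complex \<Rightarrow> complex \<Rightarrow> complex \<Rightarrow> complex \<Rightarrow> complex \<Rightarrow> complex" where
  "Z_closed_form g th ze mu l =
     (\<lbrakk>g\<rbrakk> * \<lbrakk>ze + mu\<rbrakk>) * ((\<lbrakk>th + ze - mu\<rbrakk> * \<lbrakk>th + g\<rbrakk>) / (\<lbrakk>th + ze + l\<rbrakk> * \<lbrakk>th\<rbrakk>)) * \<lbrakk>2 * l\<rbrakk>"

text \<open>Up to a common factor, \<open>M0 tau g th ze mu a b * Z_closed_form g th ze mu b\<close> and
  \<open>M1 tau g th ze mu a b * Z_closed_form g th ze mu a\<close> are these two numerators.\<close>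

definition M0_numerator ::
  "complex \<Rightarrow> complex \<Rightarrow> complex \<Rightarrow> complex \<Rightarrow> complex \<Rightarrow> complex \<Rightarrow> complex" where
  "M0_numerator g th ze mu a b =
     \<lbrakk>g + th\<rbrakk> * \<lbrakk>2 * b + g\<rbrakk> * \<lbrakk>a - b\<rbrakk> * \<lbrakk>a - mu\<rbrakk> * \<lbrakk>a + mu\<rbrakk> * \<lbrakk>a + g - th - ze\<rbrakk> * \<lbrakk>a + g + ze\<rbrakk>
         * \<lbrakk>a + b + g\<rbrakk> * \<lbrakk>2 * a\<rbrakk>
     - \<lbrakk>th\<rbrakk> * \<lbrakk>2 * b + g\<rbrakk> * \<lbrakk>a - b - g\<rbrakk> * \<lbrakk>a - th - ze\<rbrakk> * \<lbrakk>a + ze\<rbrakk> * \<lbrakk>a + g - mu\<rbrakk>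
         * \<lbrakk>a + g + mu\<rbrakk> * \<lbrakk>a + b\<rbrakk> * \<lbrakk>2 * a + g\<rbrakk>
     - \<lbrakk>g\<rbrakk> * \<lbrakk>2 * b + g\<rbrakk> * \<lbrakk>a - b\<rbrakk> * \<lbrakk>a - ze\<rbrakk> * \<lbrakk>a + th + ze\<rbrakk> * \<lbrakk>a + g - mu\<rbrakk> * \<lbrakk>a + g + mu\<rbrakk>
         * \<lbrakk>a + b + g\<rbrakk> * \<lbrakk>2 * a - th\<rbrakk>"

definition M1_numerator ::
  "complex \<Rightarrow> complex \<Rightarrow> complex \<Rightarrow> complex \<Rightarrow> complex \<Rightarrow> complex \<Rightarrow> complex" where
  "M1_numerator g th ze mu a b =
     \<lbrakk>g\<rbrakk> * \<lbrakk>b - th - ze\<rbrakk> * \<lbrakk>b + ze\<rbrakk> * \<lbrakk>b + g - mu\<rbrakk> * \<lbrakk>b + g + mu\<rbrakk> * \<lbrakk>a - b - th\<rbrakk> * \<lbrakk>a + b + g\<rbrakk>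
         * \<lbrakk>2 * a\<rbrakk> * \<lbrakk>2 * a + g\<rbrakk>
     - \<lbrakk>g\<rbrakk> * \<lbrakk>b - mu\<rbrakk> * \<lbrakk>b + mu\<rbrakk> * \<lbrakk>b + g - ze\<rbrakk> * \<lbrakk>b + g + th + ze\<rbrakk> * \<lbrakk>a - b\<rbrakk>
         * \<lbrakk>a + b + g - th\<rbrakk> * \<lbrakk>2 * a\<rbrakk> * \<lbrakk>2 * a + g\<rbrakk>"

text \<open>An explicit combination of seven instances of the Weierstrass relation.\<close>

lemma numerators_cancel:
  assumes "\<lbrakk>a + g - ze\<rbrakk> \<noteq> 0" "\<lbrakk>g\<rbrakk> \<noteq> 0" "\<lbrakk>2 * b + g\<rbrakk> \<noteq> 0"
  shows "M0_numerator g th ze mu a b + M1_numerator g th ze mu a b = 0"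
proof -
  have w1: "\<lbrakk>a + g + ze\<rbrakk> * \<lbrakk>a + g - ze\<rbrakk> * \<lbrakk>a - mu\<rbrakk> * \<lbrakk>a + mu\<rbrakk>
      - (\<lbrakk>2 * a + g\<rbrakk> * \<lbrakk>g\<rbrakk> * \<lbrakk>ze - mu\<rbrakk> * \<lbrakk>ze + mu\<rbrakk>
         - \<lbrakk>a + g - mu\<rbrakk> * \<lbrakk>a + g + mu\<rbrakk> * \<lbrakk>a + ze\<rbrakk> * \<lbrakk>- (a - ze)\<rbrakk>) = 0" (is "?W1 = 0")
    by (rule weierstrass_relation[where x="a + g" and y="ze" and u="a" and v="- mu"])
       (simp_all add: field_simps)
  have w2: "\<lbrakk>g\<rbrakk> * \<lbrakk>- (2 * a - th)\<rbrakk> * \<lbrakk>a + th + ze\<rbrakk> * \<lbrakk>a + g - ze\<rbrakk>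
      - (\<lbrakk>g + th\<rbrakk> * \<lbrakk>- (2 * a)\<rbrakk> * \<lbrakk>a + ze\<rbrakk> * \<lbrakk>a + g - th - ze\<rbrakk>
         - \<lbrakk>- (a - th - ze)\<rbrakk> * \<lbrakk>- (a - g + ze)\<rbrakk> * \<lbrakk>2 * a + g\<rbrakk> * \<lbrakk>- th\<rbrakk>) = 0" (is "?W2 = 0")
    by (rule weierstrass_relation[where x="- a + g / 2 + th / 2" and y="a + g / 2 - th / 2"
         and u="a + g / 2 + th / 2" and v="- g / 2 + th / 2 + ze"])
       (simp_all add: field_simps)
  have w3: "\<lbrakk>a + b + g\<rbrakk> * \<lbrakk>- (a - b)\<rbrakk> * \<lbrakk>a - g + ze\<rbrakk> * \<lbrakk>a - ze\<rbrakk>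
      - (\<lbrakk>a + b\<rbrakk> * \<lbrakk>- (a - b - g)\<rbrakk> * \<lbrakk>a + ze\<rbrakk> * \<lbrakk>a + g - ze\<rbrakk>
         - \<lbrakk>b + ze\<rbrakk> * \<lbrakk>b + g - ze\<rbrakk> * \<lbrakk>2 * a\<rbrakk> * \<lbrakk>g\<rbrakk>) = 0" (is "?W3 = 0")
    by (rule weierstrass_relation[where x="b + g / 2" and y="a + g / 2" and u="a - g / 2"
          and v="- g / 2 + ze"])
       (simp_all add: field_simps)
  have w4: "\<lbrakk>a + g - mu\<rbrakk> * \<lbrakk>a + g + mu\<rbrakk> * \<lbrakk>- g\<rbrakk> * \<lbrakk>2 * b + g\<rbrakk>
      - (\<lbrakk>a + b + g\<rbrakk> * \<lbrakk>a - b + g\<rbrakk> * \<lbrakk>- (b + g + mu)\<rbrakk> * \<lbrakk>b + g - mu\<rbrakk>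
         - \<lbrakk>a - b\<rbrakk> * \<lbrakk>a + b + 2 * g\<rbrakk> * \<lbrakk>b - mu\<rbrakk> * \<lbrakk>- (b + mu)\<rbrakk>) = 0" (is "?W4 = 0")
    by (rule weierstrass_relation[where x="a + g" and y="- mu" and u="b" and v="- b - g"])
       (simp_all add: field_simps)
  have w5: "\<lbrakk>ze - mu\<rbrakk> * \<lbrakk>ze + mu\<rbrakk> * \<lbrakk>- g\<rbrakk> * \<lbrakk>2 * b + g\<rbrakk>
      - (\<lbrakk>b + ze\<rbrakk> * \<lbrakk>- (b - ze)\<rbrakk> * \<lbrakk>- (b + g + mu)\<rbrakk> * \<lbrakk>b + g - mu\<rbrakk>
         - \<lbrakk>- (b + g - ze)\<rbrakk> * \<lbrakk>b + g + ze\<rbrakk> * \<lbrakk>b - mu\<rbrakk> * \<lbrakk>- (b + mu)\<rbrakk>) = 0" (is "?W5 = 0")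
    by (rule weierstrass_relation[where x="ze" and y="- mu" and u="b" and v="- b - g"])
       (simp_all add: field_simps)
  have w6: "\<lbrakk>th\<rbrakk> * \<lbrakk>a - th - ze\<rbrakk> * \<lbrakk>a - b + g\<rbrakk> * \<lbrakk>- (b + g - ze)\<rbrakk>
      - (\<lbrakk>a - b\<rbrakk> * \<lbrakk>b - ze\<rbrakk> * \<lbrakk>g + th\<rbrakk> * \<lbrakk>- (a + g - th - ze)\<rbrakk>
         - \<lbrakk>a + g - ze\<rbrakk> * \<lbrakk>- g\<rbrakk> * \<lbrakk>- (b - th - ze)\<rbrakk> * \<lbrakk>- (a - b - th)\<rbrakk>) = 0" (is "?W6 = 0")
    by (rule weierstrass_relation[where x="a / 2 - ze / 2" and y="- a / 2 + th + ze / 2"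
         and u="a / 2 - b + ze / 2" and v="a / 2 + g - ze / 2"])
       (simp_all add: field_simps)
  have w7: "\<lbrakk>th\<rbrakk> * \<lbrakk>a - th - ze\<rbrakk> * \<lbrakk>a + b + 2 * g\<rbrakk> * \<lbrakk>b + ze\<rbrakk>
      - (\<lbrakk>a + b + g\<rbrakk> * \<lbrakk>- (b + g + ze)\<rbrakk> * \<lbrakk>g + th\<rbrakk> * \<lbrakk>- (a + g - th - ze)\<rbrakk>
         - \<lbrakk>a + g - ze\<rbrakk> * \<lbrakk>- g\<rbrakk> * \<lbrakk>b + g + th + ze\<rbrakk> * \<lbrakk>- (a + b + g - th)\<rbrakk>) = 0" (is "?W7 = 0")
    by (rule weierstrass_relation[where x="a / 2 - ze / 2" and y="- a / 2 + th + ze / 2"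
         and u="a / 2 + b + g + ze / 2" and v="a / 2 + g - ze / 2"])
       (simp_all add: field_simps)
  have "\<lbrakk>a + g - ze\<rbrakk> * \<lbrakk>g\<rbrakk> * \<lbrakk>2 * b + g\<rbrakk>
          * (M0_numerator g th ze mu a b + M1_numerator g th ze mu a b)
        = \<lbrakk>g\<rbrakk> * \<lbrakk>g + th\<rbrakk> * \<lbrakk>2 * b + g\<rbrakk> ^ 2 * \<lbrakk>a - b\<rbrakk> * \<lbrakk>a + g - th - ze\<rbrakk> * \<lbrakk>a + b + g\<rbrakk>
            * \<lbrakk>2 * a\<rbrakk> * ?W1
          + \<lbrakk>g\<rbrakk> * \<lbrakk>2 * b + g\<rbrakk> ^ 2 * \<lbrakk>a - b\<rbrakk> * \<lbrakk>a - ze\<rbrakk> * \<lbrakk>a + g - mu\<rbrakk> * \<lbrakk>a + g + mu\<rbrakk>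
              * \<lbrakk>a + b + g\<rbrakk> * ?W2
          - \<lbrakk>th\<rbrakk> * \<lbrakk>g\<rbrakk> * \<lbrakk>2 * b + g\<rbrakk> ^ 2 * \<lbrakk>a - th - ze\<rbrakk> * \<lbrakk>a + g - mu\<rbrakk> * \<lbrakk>a + g + mu\<rbrakk>
              * \<lbrakk>2 * a + g\<rbrakk> * ?W3
          - \<lbrakk>th\<rbrakk> * \<lbrakk>g\<rbrakk> * \<lbrakk>b + ze\<rbrakk> * \<lbrakk>b + g - ze\<rbrakk> * \<lbrakk>2 * b + g\<rbrakk> * \<lbrakk>a - th - ze\<rbrakk> * \<lbrakk>2 * a\<rbrakk>
              * \<lbrakk>2 * a + g\<rbrakk> * ?W4
          - \<lbrakk>g\<rbrakk> * \<lbrakk>g + th\<rbrakk> * \<lbrakk>2 * b + g\<rbrakk> * \<lbrakk>a - b\<rbrakk> * \<lbrakk>a + g - th - ze\<rbrakk> * \<lbrakk>a + b + g\<rbrakk> * \<lbrakk>2 * a\<rbrakk>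
              * \<lbrakk>2 * a + g\<rbrakk> * ?W5
          - \<lbrakk>g\<rbrakk> * \<lbrakk>b + ze\<rbrakk> * \<lbrakk>b + g - mu\<rbrakk> * \<lbrakk>b + g + mu\<rbrakk> * \<lbrakk>2 * b + g\<rbrakk> * \<lbrakk>a + b + g\<rbrakk> * \<lbrakk>2 * a\<rbrakk>
              * \<lbrakk>2 * a + g\<rbrakk> * ?W6
          - \<lbrakk>g\<rbrakk> * \<lbrakk>b - mu\<rbrakk> * \<lbrakk>b + mu\<rbrakk> * \<lbrakk>b + g - ze\<rbrakk> * \<lbrakk>2 * b + g\<rbrakk> * \<lbrakk>a - b\<rbrakk> * \<lbrakk>2 * a\<rbrakk>
              * \<lbrakk>2 * a + g\<rbrakk> * ?W7"
    unfolding M0_numerator_def M1_numerator_def bracket_minus by algebra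
  also have "\<dots> = 0"
    unfolding w1 w2 w3 w4 w5 w6 w7 by simp
  finally show ?thesis
    using assms by simp
qed

lemma Z_closed_form_solves_functional_equation:
  assumes "\<lbrakk>g\<rbrakk> \<noteq> 0" "\<lbrakk>th\<rbrakk> \<noteq> 0" "\<lbrakk>g - th\<rbrakk> \<noteq> 0"
    and "\<lbrakk>a + g - ze\<rbrakk> \<noteq> 0" "\<lbrakk>2 * a + g\<rbrakk> \<noteq> 0" "\<lbrakk>a + th + ze\<rbrakk> \<noteq> 0"
    and "\<lbrakk>2 * b + g\<rbrakk> \<noteq> 0" "\<lbrakk>b + th + ze\<rbrakk> \<noteq> 0" "\<lbrakk>a - b\<rbrakk> \<noteq> 0" "\<lbrakk>a + b + g\<rbrakk> \<noteq> 0"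
  shows "M0 tau g th ze mu a b * Z_closed_form g th ze mu b
           + M1 tau g th ze mu a b * Z_closed_form g th ze mu a = 0"
proof -
  \<comment> \<open>normal forms of the bracket arguments, matching those in the numerators\<close>
  have canon:
    "\<lbrakk>b - a + g\<rbrakk> = - \<lbrakk>a - b - g\<rbrakk>"
    "\<lbrakk>b + a\<rbrakk> = \<lbrakk>a + b\<rbrakk>"
    "\<lbrakk>b - a\<rbrakk> = - \<lbrakk>a - b\<rbrakk>"
    "\<lbrakk>b + a + g\<rbrakk> = \<lbrakk>a + b + g\<rbrakk>"
    "\<lbrakk>ze - a\<rbrakk> = - \<lbrakk>a - ze\<rbrakk>"
    "\<lbrakk>th - 2 * a\<rbrakk> = - \<lbrakk>2 * a - th\<rbrakk>"
    "\<lbrakk>a - mu + g\<rbrakk> = \<lbrakk>a + g - mu\<rbrakk>"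
    "\<lbrakk>a + mu + g\<rbrakk> = \<lbrakk>a + g + mu\<rbrakk>"
    "\<lbrakk>ze + a + g\<rbrakk> = \<lbrakk>a + g + ze\<rbrakk>"
    "\<lbrakk>th + ze - a - g\<rbrakk> = - \<lbrakk>a + g - th - ze\<rbrakk>"
    "\<lbrakk>th + g\<rbrakk> = \<lbrakk>g + th\<rbrakk>"
    "\<lbrakk>th + ze + a\<rbrakk> = \<lbrakk>a + th + ze\<rbrakk>"
    "\<lbrakk>ze + a\<rbrakk> = \<lbrakk>a + ze\<rbrakk>"
    "\<lbrakk>th + ze - a\<rbrakk> = - \<lbrakk>a - th - ze\<rbrakk>"
    "\<lbrakk>th + b - a\<rbrakk> = - \<lbrakk>a - b - th\<rbrakk>"
    "\<lbrakk>ze + b\<rbrakk> = \<lbrakk>b + ze\<rbrakk>"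
    "\<lbrakk>th + ze - b\<rbrakk> = - \<lbrakk>b - th - ze\<rbrakk>"
    "\<lbrakk>th + ze + b\<rbrakk> = \<lbrakk>b + th + ze\<rbrakk>"
    "\<lbrakk>b - mu + g\<rbrakk> = \<lbrakk>b + g - mu\<rbrakk>"
    "\<lbrakk>b + mu + g\<rbrakk> = \<lbrakk>b + g + mu\<rbrakk>"
    "\<lbrakk>th - g - b - a\<rbrakk> = - \<lbrakk>a + b + g - th\<rbrakk>"
    "\<lbrakk>th - g\<rbrakk> = - \<lbrakk>g - th\<rbrakk>"
    "\<lbrakk>ze - b - g\<rbrakk> = - \<lbrakk>b + g - ze\<rbrakk>"
    "\<lbrakk>th + ze + b + g\<rbrakk> = \<lbrakk>b + g + th + ze\<rbrakk>"
    by (rule bracket_eq_minus_bracket arg_cong[where f="br tau"]; simp add: algebra_simps)+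
  define K where "K = \<lbrakk>g\<rbrakk> * \<lbrakk>ze + mu\<rbrakk> * \<lbrakk>g + th\<rbrakk> * \<lbrakk>th + ze - mu\<rbrakk> / \<lbrakk>th\<rbrakk> * \<lbrakk>2 * b\<rbrakk>
    / (\<lbrakk>2 * a + g\<rbrakk> * \<lbrakk>th\<rbrakk> * \<lbrakk>a + th + ze\<rbrakk> * \<lbrakk>b + th + ze\<rbrakk> * (- \<lbrakk>a - b\<rbrakk>) * \<lbrakk>a + b + g\<rbrakk>
        * \<lbrakk>2 * b + g\<rbrakk>)"
  have "M0 tau g th ze mu a b * Z_closed_form g th ze mu b = K * M0_numerator g th ze mu a b"
    unfolding M0_def LamAbar_def LamA_def Z_closed_form_def M0_numerator_def K_def canon
    using assms by (simp add: field_simps cong: bracket_atom_cong)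
  moreover have "M1 tau g th ze mu a b * Z_closed_form g th ze mu a = K
      * M1_numerator g th ze mu a b"
    unfolding M1_def LamDt_def LamA_def Z_closed_form_def M1_numerator_def K_def canon
    using assms by (simp add: field_simps cong: bracket_atom_cong)
  ultimately have "M0 tau g th ze mu a b * Z_closed_form g th ze mu b
      + M1 tau g th ze mu a b * Z_closed_form g th ze mu a
      = K * (M0_numerator g th ze mu a b + M1_numerator g th ze mu a b)"
    by (simp add: distrib_left)
  then show ?thesis
    unfolding numerators_cancel[OF assms(4,1,7)] by simp
qed

lemma Z_closed_form_eq_m1_form:
  assumes "\<lbrakk>th\<rbrakk> \<noteq> 0" "\<lbrakk>2 * b + g\<rbrakk> \<noteq> 0" "\<lbrakk>b + th + ze\<rbrakk> \<noteq> 0"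
  shows "Z_closed_form g th ze mu b = \<lbrakk>g\<rbrakk> * (\<lbrakk>2 * b\<rbrakk> / \<lbrakk>2 * b + g\<rbrakk>) * m1 tau g th ze mu b"
proof -
  have "\<lbrakk>ze + mu\<rbrakk> * \<lbrakk>th + ze - mu\<rbrakk> * \<lbrakk>g + th\<rbrakk> * \<lbrakk>2 * b + g\<rbrakk>
      - (\<lbrakk>b + g + th + ze\<rbrakk> * \<lbrakk>- (b + g - ze)\<rbrakk> * \<lbrakk>- (b - mu)\<rbrakk> * \<lbrakk>b - th + mu\<rbrakk>
         - \<lbrakk>- (b - th - ze)\<rbrakk> * \<lbrakk>b + ze\<rbrakk> * \<lbrakk>b + g + mu\<rbrakk> * \<lbrakk>- (b + g + th - mu)\<rbrakk>) = 0"
    by (rule weierstrass_relation[where x="th / 2 + ze" and y="- th / 2 + mu"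
          and u="b + g + th / 2" and v="- b + th / 2"]) (simp_all add: field_simps)
  then have cleared: "\<lbrakk>ze + mu\<rbrakk> * \<lbrakk>th + ze - mu\<rbrakk> * \<lbrakk>g + th\<rbrakk> * \<lbrakk>2 * b + g\<rbrakk>
      + \<lbrakk>b - th - ze\<rbrakk> * \<lbrakk>b + ze\<rbrakk> * \<lbrakk>b + g + mu\<rbrakk> * \<lbrakk>b + g + th - mu\<rbrakk>
      - \<lbrakk>b - th + mu\<rbrakk> * \<lbrakk>b - mu\<rbrakk> * \<lbrakk>b + g - ze\<rbrakk> * \<lbrakk>b + g + th + ze\<rbrakk> = 0"
    unfolding bracket_minus by algebra
  have canon:
    "\<lbrakk>th + ze - b\<rbrakk> = - \<lbrakk>b - th - ze\<rbrakk>"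
    "\<lbrakk>th + g + b - mu\<rbrakk> = \<lbrakk>b + g + th - mu\<rbrakk>"
    "\<lbrakk>th + ze + b\<rbrakk> = \<lbrakk>b + th + ze\<rbrakk>"
    "\<lbrakk>b + mu + g\<rbrakk> = \<lbrakk>b + g + mu\<rbrakk>"
    "\<lbrakk>b - ze + g\<rbrakk> = \<lbrakk>b + g - ze\<rbrakk>"
    "\<lbrakk>th + ze + b + g\<rbrakk> = \<lbrakk>b + g + th + ze\<rbrakk>"
    "\<lbrakk>th - b - mu\<rbrakk> = - \<lbrakk>b - th + mu\<rbrakk>"
    "\<lbrakk>th + g\<rbrakk> = \<lbrakk>g + th\<rbrakk>"
    by (rule bracket_eq_minus_bracket arg_cong[where f="br tau"]; simp add: algebra_simps)+
  have "Z_closed_form g th ze mu b - \<lbrakk>g\<rbrakk> * (\<lbrakk>2 * b\<rbrakk> / \<lbrakk>2 * b + g\<rbrakk>) * m1 tau g th ze mu b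
      = \<lbrakk>g\<rbrakk> * \<lbrakk>2 * b\<rbrakk> / (\<lbrakk>b + th + ze\<rbrakk> * \<lbrakk>th\<rbrakk> * \<lbrakk>2 * b + g\<rbrakk>)
        * (\<lbrakk>ze + mu\<rbrakk> * \<lbrakk>th + ze - mu\<rbrakk> * \<lbrakk>g + th\<rbrakk> * \<lbrakk>2 * b + g\<rbrakk>
           + \<lbrakk>b - th - ze\<rbrakk> * \<lbrakk>b + ze\<rbrakk> * \<lbrakk>b + g + mu\<rbrakk> * \<lbrakk>b + g + th - mu\<rbrakk>
           - \<lbrakk>b - th + mu\<rbrakk> * \<lbrakk>b - mu\<rbrakk> * \<lbrakk>b + g - ze\<rbrakk> * \<lbrakk>b + g + th + ze\<rbrakk>)"
    unfolding m1_def Z_closed_form_def canon using assms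
    by (simp add: field_simps cong: bracket_atom_cong)
  then show ?thesis
    unfolding cleared by simp
qed

lemma PartFun_eq:
  "PartFun tau g th ze mu b =
     \<lbrakk>b - mu\<rbrakk> * \<lbrakk>th - g\<rbrakk> / \<lbrakk>th\<rbrakk> * (\<lbrakk>ze + b\<rbrakk> * \<lbrakk>th + ze - b\<rbrakk> / \<lbrakk>th + ze + b\<rbrakk>)
         * (\<lbrakk>th + (b + mu)\<rbrakk> * \<lbrakk>g\<rbrakk> / \<lbrakk>th\<rbrakk>)
     + \<lbrakk>th - (b - mu)\<rbrakk> * \<lbrakk>g\<rbrakk> / \<lbrakk>th\<rbrakk> * \<lbrakk>ze - b\<rbrakk> * (\<lbrakk>b + mu\<rbrakk> * \<lbrakk>th - g\<rbrakk> / \<lbrakk>th\<rbrakk>)"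
proof -
  have "(\<Sum>z\<in>UNIV. f z) = f (True, True) + f (True, False) + f (False, True) + f (False, False)"
    for f :: "bool \<times> bool \<Rightarrow> complex"
    by (simp add: UNIV_bool UNIV_Times_UNIV[symmetric] add.assoc del: UNIV_Times_UNIV)
  then show ?thesis
    unfolding PartFun_def DoubleRow_def mmul_def T0_def Tbar0_def K0_def Rmat_def
    by (simp add: algebra_simps cong: bracket_atom_cong)
qed

lemma PartFun_eq_Z_closed_form:
  assumes "\<lbrakk>th\<rbrakk> \<noteq> 0" "\<lbrakk>g + th\<rbrakk> \<noteq> 0" "\<lbrakk>ze + mu\<rbrakk> \<noteq> 0" "\<lbrakk>th + ze - mu\<rbrakk> \<noteq> 0"
    "\<lbrakk>b + th + ze\<rbrakk> \<noteq> 0"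
  shows "PartFun tau g th ze mu b
           = (\<lbrakk>th - g\<rbrakk> / \<lbrakk>th + g\<rbrakk>) * ((\<lbrakk>ze - mu\<rbrakk> * \<lbrakk>th + ze + mu\<rbrakk>) / (\<lbrakk>ze + mu\<rbrakk> * \<lbrakk>th + ze - mu\<rbrakk>))
             * Z_closed_form g th ze mu b"
proof -
  have "\<lbrakk>b - mu\<rbrakk> * \<lbrakk>b + th + mu\<rbrakk> * \<lbrakk>b + ze\<rbrakk> * \<lbrakk>- (b - th - ze)\<rbrakk>
      - (\<lbrakk>b + th + ze\<rbrakk> * \<lbrakk>b - ze\<rbrakk> * \<lbrakk>b - th - mu\<rbrakk> * \<lbrakk>- (b + mu)\<rbrakk>
         - \<lbrakk>2 * b\<rbrakk> * \<lbrakk>th\<rbrakk> * \<lbrakk>ze - mu\<rbrakk> * \<lbrakk>- (th + ze + mu)\<rbrakk>) = 0"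
    by (rule weierstrass_relation[where x="b + th / 2" and y="- th / 2 - mu"
          and u="th / 2 + ze" and v="b - th / 2"]) (simp_all add: field_simps)
  then have cleared: "\<lbrakk>b - th - mu\<rbrakk> * \<lbrakk>b - ze\<rbrakk> * \<lbrakk>b + mu\<rbrakk> * \<lbrakk>b + th + ze\<rbrakk>
      - \<lbrakk>ze - mu\<rbrakk> * \<lbrakk>th\<rbrakk> * \<lbrakk>th + ze + mu\<rbrakk> * \<lbrakk>2 * b\<rbrakk>
      - \<lbrakk>b - th - ze\<rbrakk> * \<lbrakk>b - mu\<rbrakk> * \<lbrakk>b + ze\<rbrakk> * \<lbrakk>b + th + mu\<rbrakk> = 0"
    unfolding bracket_minus by algebra
  have canon:
    "\<lbrakk>th - g\<rbrakk> = - \<lbrakk>g - th\<rbrakk>"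
    "\<lbrakk>ze + b\<rbrakk> = \<lbrakk>b + ze\<rbrakk>"
    "\<lbrakk>th + ze - b\<rbrakk> = - \<lbrakk>b - th - ze\<rbrakk>"
    "\<lbrakk>th + ze + b\<rbrakk> = \<lbrakk>b + th + ze\<rbrakk>"
    "\<lbrakk>th + (b + mu)\<rbrakk> = \<lbrakk>b + th + mu\<rbrakk>"
    "\<lbrakk>th - (b - mu)\<rbrakk> = - \<lbrakk>b - th - mu\<rbrakk>"
    "\<lbrakk>ze - b\<rbrakk> = - \<lbrakk>b - ze\<rbrakk>"
    "\<lbrakk>th + g\<rbrakk> = \<lbrakk>g + th\<rbrakk>"
    by (rule bracket_eq_minus_bracket arg_cong[where f="br tau"]; simp add: algebra_simps)+
  have "PartFun tau g th ze mu b
      - (\<lbrakk>th - g\<rbrakk> / \<lbrakk>th + g\<rbrakk>) * ((\<lbrakk>ze - mu\<rbrakk> * \<lbrakk>th + ze + mu\<rbrakk>) / (\<lbrakk>ze + mu\<rbrakk> * \<lbrakk>th + ze - mu\<rbrakk>))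
        * Z_closed_form g th ze mu b
      = - (\<lbrakk>g - th\<rbrakk> * \<lbrakk>g\<rbrakk> / (\<lbrakk>th\<rbrakk> * \<lbrakk>th\<rbrakk> * \<lbrakk>b + th + ze\<rbrakk>))
        * (\<lbrakk>b - th - mu\<rbrakk> * \<lbrakk>b - ze\<rbrakk> * \<lbrakk>b + mu\<rbrakk> * \<lbrakk>b + th + ze\<rbrakk>
           - \<lbrakk>ze - mu\<rbrakk> * \<lbrakk>th\<rbrakk> * \<lbrakk>th + ze + mu\<rbrakk> * \<lbrakk>2 * b\<rbrakk>
           - \<lbrakk>b - th - ze\<rbrakk> * \<lbrakk>b - mu\<rbrakk> * \<lbrakk>b + ze\<rbrakk> * \<lbrakk>b + th + mu\<rbrakk>)"
    unfolding PartFun_eq Z_closed_form_def canon using assms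
    by (simp add: field_simps cong: bracket_atom_cong)
  then show ?thesis
    unfolding cleared by simp
qed

section \<open>Uniqueness of the solution\<close>

lemma not_islimpt_M0_zeros:
  assumes "LamA tau g th ze mu a \<noteq> 0" "\<lbrakk>g\<rbrakk> \<noteq> 0" "\<lbrakk>2 * a\<rbrakk> \<noteq> 0"
  shows "\<not> z islimpt {l. M0 tau g th ze mu a l = 0}"
proof -
  define N where "N l = LamAbar tau g th ze mu a * (\<lbrakk>l - a\<rbrakk> * \<lbrakk>l + a + g\<rbrakk>)
      - LamA tau g th ze mu a * (\<lbrakk>l - a + g\<rbrakk> * \<lbrakk>l + a\<rbrakk>)" for l
  have "M0 tau g th ze mu a l * (\<lbrakk>l - a\<rbrakk> * \<lbrakk>l + a + g\<rbrakk>) = N l"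
    if "\<lbrakk>l - a\<rbrakk> \<noteq> 0" "\<lbrakk>l + a + g\<rbrakk> \<noteq> 0" for l
    unfolding M0_def N_def using that by (simp add: field_simps cong: bracket_atom_cong)
  then have sub: "{l. M0 tau g th ze mu a l = 0}
      \<subseteq> {l. N l = 0} \<union> {l. \<lbrakk>l - a\<rbrakk> = 0} \<union> {l. \<lbrakk>l + a + g\<rbrakk> = 0}"
    by force
  have Na: "N a = - (LamA tau g th ze mu a * (\<lbrakk>g\<rbrakk> * \<lbrakk>2 * a\<rbrakk>))"
    unfolding N_def diff_self add_0 mult_2[symmetric] bracket_zero
    by (simp only: mult_zero_left mult_zero_right diff_0)
  have "\<not> z islimpt {l. N l = 0}"
  proof (rule not_islimpt_zeros_holomorphic)
    show "N holomorphic_on UNIV"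
      unfolding N_def by (intro holomorphic_intros)
    show "N a \<noteq> 0"
      using Na assms by simp
  qed
  moreover have "\<not> z islimpt {l. \<lbrakk>l - a\<rbrakk> = 0}" "\<not> z islimpt {l. \<lbrakk>l + a + g\<rbrakk> = 0}"
    by (rule not_islimpt_bracket_affine_zeros[where c=1 and d="- a"]
          not_islimpt_bracket_affine_zeros[where c=1 and d="a + g"];
       force simp: algebra_simps)+
  ultimately show ?thesis
    using islimpt_subset[OF _ sub] by (auto simp: islimpt_Un)
qed

definition degenerate_params :: "(complex \<times> complex \<times> complex \<times> complex) set" where
  "degenerate_params =
     {(g, th, ze, mu). \<lbrakk>g\<rbrakk> * \<lbrakk>th\<rbrakk> * \<lbrakk>g - th\<rbrakk> * \<lbrakk>ze + mu\<rbrakk> * \<lbrakk>th + ze - mu\<rbrakk> * \<lbrakk>g + th\<rbrakk> = 0}"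

lemma closed_degenerate_params: "closed degenerate_params"
proof -
  have "degenerate_params = {p. (\<lambda>(g, th, ze, mu).
      \<lbrakk>g\<rbrakk> * \<lbrakk>th\<rbrakk> * \<lbrakk>g - th\<rbrakk> * \<lbrakk>ze + mu\<rbrakk> * \<lbrakk>th + ze - mu\<rbrakk> * \<lbrakk>g + th\<rbrakk>) p = 0}"
    unfolding degenerate_params_def by auto
  also have "closed \<dots>"
    by (intro closed_Collect_eq continuous_on_const)
       (auto simp: case_prod_beta intro!: continuous_intros)
  finally show ?thesis .
qed

text \<open>Along the line \<open>t \<mapsto> p + t (1, 10, 100, 1000)\<close> every factor of the defining product
  is a bracket of a non-constant affine function of \<open>t\<close>, so its zeros are isolated.\<close>

lemma interior_degenerate_params: "interior degenerate_params = {}"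
proof (rule ccontr)
  assume "interior degenerate_params \<noteq> {}"
  then obtain g th ze mu where p: "(g, th, ze, mu) \<in> interior degenerate_params"
    by auto
  define line where "line t = (g + t, th + 10 * t, ze + 100 * t, mu + 1000 * t)" for t :: complex
  have "open (line -` interior degenerate_params)"
    unfolding line_def by (intro open_vimage open_interior continuous_intros)
  moreover have "0 \<in> line -` interior degenerate_params"
    using p by (simp add: line_def)
  ultimately obtain d where d: "d > 0" "ball 0 d \<subseteq> line -` interior degenerate_params"
    by (meson open_contains_ball)
  have "0 islimpt ball (0::complex) d"
    using d(1) by (simp add: islimpt_ball)
  moreover have "ball 0 d \<subseteq> line -` degenerate_params"
    using d(2) interior_subset by blast
  ultimately have "0 islimpt line -` degenerate_params"
    by (rule islimpt_subset)
  moreover have "line -` degenerate_params = {t. \<lbrakk>g + t\<rbrakk> = 0} \<union> {t. \<lbrakk>th + 10 * t\<rbrakk> = 0}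
      \<union> {t. \<lbrakk>g + t - (th + 10 * t)\<rbrakk> = 0} \<union> {t. \<lbrakk>ze + 100 * t + (mu + 1000 * t)\<rbrakk> = 0}
      \<union> {t. \<lbrakk>th + 10 * t + (ze + 100 * t) - (mu + 1000 * t)\<rbrakk> = 0}
      \<union> {t. \<lbrakk>g + t + (th + 10 * t)\<rbrakk> = 0}"
    by (auto simp: line_def degenerate_params_def)
  moreover have "\<not> 0 islimpt {t. \<lbrakk>g + t\<rbrakk> = 0}" "\<not> 0 islimpt {t. \<lbrakk>th + 10 * t\<rbrakk> = 0}"
    "\<not> 0 islimpt {t. \<lbrakk>g + t - (th + 10 * t)\<rbrakk> = 0}"
    "\<not> 0 islimpt {t. \<lbrakk>ze + 100 * t + (mu + 1000 * t)\<rbrakk> = 0}"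
    "\<not> 0 islimpt {t. \<lbrakk>th + 10 * t + (ze + 100 * t) - (mu + 1000 * t)\<rbrakk> = 0}"
    "\<not> 0 islimpt {t. \<lbrakk>g + t + (th + 10 * t)\<rbrakk> = 0}"
    by (rule not_islimpt_bracket_affine_zeros[where c=1 and d=g]
          not_islimpt_bracket_affine_zeros[where c=10 and d=th]
          not_islimpt_bracket_affine_zeros[where c="-9" and d="g - th"]
          not_islimpt_bracket_affine_zeros[where c=1100 and d="ze + mu"]
          not_islimpt_bracket_affine_zeros[where c="-890" and d="th + ze - mu"]
          not_islimpt_bracket_affine_zeros[where c=11 and d="g + th"];
       force simp: algebra_simps)+
  ultimately show False
    by (simp add: islimpt_Un)
qed

lemma functional_equation_solution:
  assumes nondeg: "(g, th, ze, mu) \<notin> degenerate_params"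
    and E: "\<forall>z. \<not> z islimpt E"
    and feq: "\<And>l0 l1. l0 \<notin> E \<Longrightarrow> l1 \<notin> E \<Longrightarrow> l1 - l0 \<notin> E \<Longrightarrow> l1 + l0 \<notin> E \<Longrightarrow>
                M0 tau g th ze mu l0 l1 * Z l1 + M1 tau g th ze mu l0 l1 * Z l0 = 0"
  obtains \<Omega> S where "\<forall>z. \<not> z islimpt S" "\<And>l. l \<notin> S \<Longrightarrow> Z l = \<Omega> * Z_closed_form g th ze mu l"
proof -
  have nz: "\<lbrakk>g\<rbrakk> \<noteq> 0" "\<lbrakk>th\<rbrakk> \<noteq> 0" "\<lbrakk>g - th\<rbrakk> \<noteq> 0" "\<lbrakk>ze + mu\<rbrakk> \<noteq> 0"
    "\<lbrakk>th + ze - mu\<rbrakk> \<noteq> 0" "\<lbrakk>g + th\<rbrakk> \<noteq> 0"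
    using nondeg unfolding degenerate_params_def by auto
  \<comment> \<open>the auxiliary point \<open>\<lambda>\<^sub>0 = a\<close> avoids \<open>E\<close> and every bracket that has to be nonzero at it\<close>
  define B where "B = E \<union> {a. \<lbrakk>a + g - ze\<rbrakk> = 0} \<union> {a. \<lbrakk>2 * a + g\<rbrakk> = 0}
    \<union> {a. \<lbrakk>a + th + ze\<rbrakk> = 0} \<union> {a. \<lbrakk>2 * a\<rbrakk> = 0} \<union> {a. \<lbrakk>ze + a\<rbrakk> = 0}
    \<union> {a. \<lbrakk>th + ze - a\<rbrakk> = 0} \<union> {a. \<lbrakk>a - mu + g\<rbrakk> = 0} \<union> {a. \<lbrakk>a + mu + g\<rbrakk> = 0}"
  have "\<not> 0 islimpt {a. \<lbrakk>a + g - ze\<rbrakk> = 0}" "\<not> 0 islimpt {a. \<lbrakk>2 * a + g\<rbrakk> = 0}"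
    "\<not> 0 islimpt {a. \<lbrakk>a + th + ze\<rbrakk> = 0}" "\<not> 0 islimpt {a. \<lbrakk>2 * a\<rbrakk> = 0}"
    "\<not> 0 islimpt {a. \<lbrakk>ze + a\<rbrakk> = 0}" "\<not> 0 islimpt {a. \<lbrakk>th + ze - a\<rbrakk> = 0}"
    "\<not> 0 islimpt {a. \<lbrakk>a - mu + g\<rbrakk> = 0}" "\<not> 0 islimpt {a. \<lbrakk>a + mu + g\<rbrakk> = 0}"
    by (rule not_islimpt_bracket_affine_zeros[where c=1 and d="g - ze"]
          not_islimpt_bracket_affine_zeros[where c=2 and d=g]
          not_islimpt_bracket_affine_zeros[where c=1 and d="th + ze"]
          not_islimpt_bracket_affine_zeros[where c=2 and d=0]
          not_islimpt_bracket_affine_zeros[where c=1 and d=ze]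
          not_islimpt_bracket_affine_zeros[where c="-1" and d="th + ze"]
          not_islimpt_bracket_affine_zeros[where c=1 and d="g - mu"]
          not_islimpt_bracket_affine_zeros[where c=1 and d="mu + g"];
       force simp: algebra_simps)+
  then have "\<not> 0 islimpt B"
    using E unfolding B_def by (simp add: islimpt_Un)
  then obtain a where "a \<notin> B"
    by (metis UNIV_eq_I islimpt_UNIV)
  then have aE: "a \<notin> E" and na: "\<lbrakk>a + g - ze\<rbrakk> \<noteq> 0" "\<lbrakk>2 * a + g\<rbrakk> \<noteq> 0"
    "\<lbrakk>a + th + ze\<rbrakk> \<noteq> 0" "\<lbrakk>2 * a\<rbrakk> \<noteq> 0" "\<lbrakk>ze + a\<rbrakk> \<noteq> 0" "\<lbrakk>th + ze - a\<rbrakk> \<noteq> 0"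
    "\<lbrakk>a - mu + g\<rbrakk> \<noteq> 0" "\<lbrakk>a + mu + g\<rbrakk> \<noteq> 0"
    unfolding B_def by auto
  have "LamA tau g th ze mu a \<noteq> 0"
    unfolding LamA_def using na by (simp add: ac_simps)
  then have M0_zeros: "\<not> z islimpt {l. M0 tau g th ze mu a l = 0}" for z
    using not_islimpt_M0_zeros nz(1) na(4) by blast
  define \<Omega> where "\<Omega> = Z a / Z_closed_form g th ze mu a"
  have Za: "Z a = \<Omega> * Z_closed_form g th ze mu a"
    unfolding \<Omega>_def Z_closed_form_def using nz na by (simp add: ac_simps)
  define S where "S = E \<union> {l. l - a \<in> E} \<union> {l. l + a \<in> E} \<union> {l. M0 tau g th ze mu a l = 0}
    \<union> {l. \<lbrakk>2 * l + g\<rbrakk> = 0} \<union> {l. \<lbrakk>l + th + ze\<rbrakk> = 0} \<union> {l. \<lbrakk>a - l\<rbrakk> = 0}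
    \<union> {l. \<lbrakk>a + l + g\<rbrakk> = 0}"
  show thesis
  proof
    show "\<forall>z. \<not> z islimpt S"
    proof
      fix z
      have "\<not> z islimpt {l. \<lbrakk>2 * l + g\<rbrakk> = 0}" "\<not> z islimpt {l. \<lbrakk>l + th + ze\<rbrakk> = 0}"
        "\<not> z islimpt {l. \<lbrakk>a - l\<rbrakk> = 0}" "\<not> z islimpt {l. \<lbrakk>a + l + g\<rbrakk> = 0}"
        by (rule not_islimpt_bracket_affine_zeros[where c=2 and d=g]
              not_islimpt_bracket_affine_zeros[where c=1 and d="th + ze"]
              not_islimpt_bracket_affine_zeros[where c="-1" and d=a]
              not_islimpt_bracket_affine_zeros[where c=1 and d="a + g"];
           force simp: algebra_simps)+
      then show "\<not> z islimpt S"
        unfolding S_def using E M0_zeros not_islimpt_translate[OF E, of z a]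
          not_islimpt_translate[OF E, of z "- a"] by (simp add: islimpt_Un)
    qed
  next
    fix l assume "l \<notin> S"
    then have lE: "l \<notin> E" "l - a \<notin> E" "l + a \<notin> E" and M0: "M0 tau g th ze mu a l \<noteq> 0"
      and nl: "\<lbrakk>2 * l + g\<rbrakk> \<noteq> 0" "\<lbrakk>l + th + ze\<rbrakk> \<noteq> 0" "\<lbrakk>a - l\<rbrakk> \<noteq> 0" "\<lbrakk>a + l + g\<rbrakk> \<noteq> 0"
      unfolding S_def by auto
    have "M0 tau g th ze mu a l * Z l + M1 tau g th ze mu a l * Z a = 0"
      by (rule feq[OF aE lE])
    moreover have "M0 tau g th ze mu a l * Z_closed_form g th ze mu l
        + M1 tau g th ze mu a l * Z_closed_form g th ze mu a = 0"
      by (rule Z_closed_form_solves_functional_equation) (use nz na nl in auto)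
    moreover have "M0 tau g th ze mu a l * (Z l - \<Omega> * Z_closed_form g th ze mu l)
        = (M0 tau g th ze mu a l * Z l + M1 tau g th ze mu a l * Z a)
          - \<Omega> * (M0 tau g th ze mu a l * Z_closed_form g th ze mu l
                 + M1 tau g th ze mu a l * Z_closed_form g th ze mu a)
          + M1 tau g th ze mu a l * (\<Omega> * Z_closed_form g th ze mu a - Z a)"
      by (simp add: algebra_simps)
    ultimately have "M0 tau g th ze mu a l * (Z l - \<Omega> * Z_closed_form g th ze mu l) = 0"
      unfolding Za by simp
    then show "Z l = \<Omega> * Z_closed_form g th ze mu l"
      using M0 by simp
  qed
qed

lemma solutions_of_functional_equation:
  assumes nondeg: "(g, th, ze, mu) \<notin> degenerate_params"
    and "\<exists>E. (\<forall>z. \<not> z islimpt E) \<and>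
          (\<forall>l0 l1. l0 \<notin> E \<longrightarrow> l1 \<notin> E \<longrightarrow> l1 - l0 \<notin> E \<longrightarrow> l1 + l0 \<notin> E \<longrightarrow>
             M0 tau g th ze mu l0 l1 * Z l1 + M1 tau g th ze mu l0 l1 * Z l0 = 0)"
  shows "\<exists>\<Omega> S. (\<forall>z. \<not> z islimpt S) \<and>
    (\<forall>l. l \<notin> S \<longrightarrow> Z l = \<Omega> * Z_closed_form g th ze mu l
       \<and> \<Omega> * Z_closed_form g th ze mu l = \<Omega> * \<lbrakk>g\<rbrakk> * (\<lbrakk>2 * l\<rbrakk> / \<lbrakk>2 * l + g\<rbrakk>) * m1 tau g th ze mu l) \<and>
    (\<Omega> = (\<lbrakk>th - g\<rbrakk> / \<lbrakk>th + g\<rbrakk>) * ((\<lbrakk>ze - mu\<rbrakk> * \<lbrakk>th + ze + mu\<rbrakk>) / (\<lbrakk>ze + mu\<rbrakk> * \<lbrakk>th + ze - mu\<rbrakk>))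
       \<longrightarrow> (\<forall>l. l \<notin> S \<longrightarrow> Z l = PartFun tau g th ze mu l))"
proof -
  obtain \<Omega> S where S: "\<forall>z. \<not> z islimpt S"
    and Z: "\<And>l. l \<notin> S \<Longrightarrow> Z l = \<Omega> * Z_closed_form g th ze mu l"
    using functional_equation_solution[OF nondeg] assms(2) by metis
  have nz: "\<lbrakk>th\<rbrakk> \<noteq> 0" "\<lbrakk>g + th\<rbrakk> \<noteq> 0" "\<lbrakk>ze + mu\<rbrakk> \<noteq> 0" "\<lbrakk>th + ze - mu\<rbrakk> \<noteq> 0"
    using nondeg unfolding degenerate_params_def by auto
  define S' where "S' = S \<union> {l. \<lbrakk>2 * l + g\<rbrakk> = 0} \<union> {l. \<lbrakk>l + th + ze\<rbrakk> = 0}"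
  have "\<not> z islimpt {l. \<lbrakk>2 * l + g\<rbrakk> = 0}" "\<not> z islimpt {l. \<lbrakk>l + th + ze\<rbrakk> = 0}" for z
    by (rule not_islimpt_bracket_affine_zeros[where c=2 and d=g]
          not_islimpt_bracket_affine_zeros[where c=1 and d="th + ze"];
       force simp: algebra_simps)+
  then have "\<forall>z. \<not> z islimpt S'"
    using S unfolding S'_def by (simp add: islimpt_Un)
  moreover have "Z l = \<Omega> * Z_closed_form g th ze mu l"
    "Z_closed_form g th ze mu l = \<lbrakk>g\<rbrakk> * (\<lbrakk>2 * l\<rbrakk> / \<lbrakk>2 * l + g\<rbrakk>) * m1 tau g th ze mu l"
    "PartFun tau g th ze mu l = (\<lbrakk>th - g\<rbrakk> / \<lbrakk>th + g\<rbrakk>)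
       * ((\<lbrakk>ze - mu\<rbrakk> * \<lbrakk>th + ze + mu\<rbrakk>) / (\<lbrakk>ze + mu\<rbrakk> * \<lbrakk>th + ze - mu\<rbrakk>)) * Z_closed_form g th ze mu l"
    if "l \<notin> S'" for l
    using that nz by (auto simp: S'_def Z Z_closed_form_eq_m1_form PartFun_eq_Z_closed_form)
  ultimately show ?thesis
    by (intro exI[of _ \<Omega>] exI[of _ S']) (auto simp: mult.assoc)
qed

end

theorem lemma3p6:
  fixes tau :: complex
  assumes "Im tau > 0"
  shows "\<exists>P :: (complex \<times> complex \<times> complex \<times> complex) set.
    closed P \<and> interior P = {} \<and>
    (\<forall>g th ze mu. (g, th, ze, mu) \<notin> P \<longrightarrow>
      (\<forall>Z :: complex \<Rightarrow> complex.
         (\<exists>E :: complex set. (\<forall>z. \<not> z islimpt E) \<and>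
            (\<forall>l0 l1. l0 \<notin> E \<longrightarrow> l1 \<notin> E \<longrightarrow> l1 - l0 \<notin> E \<longrightarrow> l1 + l0 \<notin> E \<longrightarrow>
               M0 tau g th ze mu l0 l1 * Z l1 + M1 tau g th ze mu l0 l1 * Z l0 = 0))
         \<longrightarrow>
         (\<exists>\<Omega> :: complex. \<exists>S :: complex set. (\<forall>z. \<not> z islimpt S) \<and>
            (\<forall>l. l \<notin> S \<longrightarrow>
               Z l = \<Omega> * (br tau g * br tau (ze + mu))
                       * ((br tau (th + ze - mu) * br tau (th + g))
                          / (br tau (th + ze + l) * br tau th)) * br tau (2 * l)
             \<and> \<Omega> * (br tau g * br tau (ze + mu))
                       * ((br tau (th + ze - mu) * br tau (th + g))
                          / (br tau (th + ze + l) * br tau th)) * br tau (2 * l)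
               = \<Omega> * br tau g * (br tau (2 * l) / br tau (2 * l + g)) * m1 tau g th ze mu l) \<and>
            (\<Omega> = (br tau (th - g) / br tau (th + g))
                  * ((br tau (ze - mu) * br tau (th + ze + mu))
                     / (br tau (ze + mu) * br tau (th + ze - mu)))
             \<longrightarrow> (\<forall>l. l \<notin> S \<longrightarrow> Z l = PartFun tau g th ze mu l)))))"
proof -
  interpret odd_theta tau
    by unfold_locales (rule assms)
  show ?thesis
    unfolding mult.assoc
    by (intro exI[of _ degenerate_params] conjI allI impI closed_degenerate_params
          interior_degenerate_params)
       (rule solutions_of_functional_equation[unfolded Z_closed_form_def mult.assoc])
qed

end
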